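(* For problem (P) with $\Phi_\lambda=\Phi_{+,\lambda}$: (i) every stationary point of (P) is a local minimizer of $F$; (ii) if $x^*$ is a local minimizer of $F$ with $F(x^* )<\infty$, and the Slater condition $$\{x:\ x\in\operatorname{ri}(\operatorname{dom}f),\ Ax\in\operatorname{ri}(\operatorname{dom}g),\ (Bx-b)_{\bar J_*}\le0\}\neq\emptyset$$ holds, where $J_*=\{i:(Bx^*-b)_i\ne0\}$, $\bar J_*=[r]\setminus J_*$, and "$\operatorname{ri}$" may be omitted for $f$ (resp. $g$) when $f$ (resp. $g$) is polyhedral, then $x^*$ is a stationary point of (P).
   Context: Let $f:\mathbb R^n\to(-\infty,\infty]$, $g:\mathbb R^m\to(-\infty,\infty]$ be proper, lsc and convex; $A\in\mathbb R^{m\times n}$, $B\in\mathbb R^{r\times n}$, $b\in\mathbb R^r$, $\lambda\in\mathbb R^r$, $\lambda>0$. $\Phi_{+,\lambda}(u)=\sum_{i=1}^r\lambda_i\mathbf 1_{\{u_i>0\}}$; problem (P) is $\min_x F(x)=f(x)+g(Ax)+\Phi_{+,\lambda}(Bx-b)$. $\partial$ denotes the limiting subdifferential (the convex subdifferential for convex functions); $\partial\Phi_{+,\lambda}(u)=\{z: z_i\in\mathbb R_+\text{ if }u_i=0,\ z_i=0\text{ otherwise}\}$. A point $x^*$ is a stationary point of (P) if $0\in\partial f(x^* )+A^\top\partial g(Ax^* )+B^\top\partial\Phi_{+,\lambda}(Bx^*-b)$. $\operatorname{ri}$ denotes relative interior. *)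

theory Defs
  imports "HOL-Analysis.Analysis"
begin

definition edom :: "('a \<Rightarrow> ereal) \<Rightarrow> 'a set" where
  "edom f = {x. f x < \<infinity>}"

definition epigraph_e :: "('a \<Rightarrow> ereal) \<Rightarrow> ('a \<times> real) set" where
  "epigraph_e f = {(x, t). f x \<le> ereal t}"

definition proper_fun :: "('a \<Rightarrow> ereal) \<Rightarrow> bool" where
  "proper_fun f \<longleftrightarrow> (\<forall>x. f x \<noteq> -\<infinity>) \<and> (\<exists>x. f x < \<infinity>)"

definition lsc_fun :: "('a::topological_space \<Rightarrow> ereal) \<Rightarrow> bool" where
  "lsc_fun f \<longleftrightarrow> (\<forall>x. f x \<le> Liminf (at x) f)"

definition convex_fun :: "('a::real_vector \<Rightarrow> ereal) \<Rightarrow> bool" where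
  "convex_fun f \<longleftrightarrow> convex (epigraph_e f)"

definition polyhedral_fun :: "('a::euclidean_space \<Rightarrow> ereal) \<Rightarrow> bool" where
  "polyhedral_fun f \<longleftrightarrow> polyhedron (epigraph_e f)"

definition csubdiff :: "('a::real_inner \<Rightarrow> ereal) \<Rightarrow> 'a \<Rightarrow> 'a set" where
  "csubdiff f x = {v. f x < \<infinity> \<and> (\<forall>y. f x + ereal (v \<bullet> (y - x)) \<le> f y)}"

definition Phi_plus :: "real^'r \<Rightarrow> real^'r \<Rightarrow> real" where
  "Phi_plus lam u = (\<Sum>i\<in>UNIV. lam $ i * (if u $ i > 0 then 1 else 0))"

text \<open>Its (limiting) subdifferential, as given in the paper.\<close>
definition subdiff_Phi_plus :: "real^'r \<Rightarrow> (real^'r) set" where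
  "subdiff_Phi_plus u = {z. \<forall>i. (u $ i = 0 \<longrightarrow> z $ i \<ge> 0) \<and> (u $ i \<noteq> 0 \<longrightarrow> z $ i = 0)}"

definition Fobj :: "(real^'n \<Rightarrow> ereal) \<Rightarrow> (real^'m \<Rightarrow> ereal) \<Rightarrow> real^'n^'m
    \<Rightarrow> real^'n^'r \<Rightarrow> real^'r \<Rightarrow> real^'r \<Rightarrow> real^'n \<Rightarrow> ereal" where
  "Fobj f g A B b lam x = f x + g (A *v x) + ereal (Phi_plus lam (B *v x - b))"

definition stationary :: "(real^'n \<Rightarrow> ereal) \<Rightarrow> (real^'m \<Rightarrow> ereal) \<Rightarrow> real^'n^'m
    \<Rightarrow> real^'n^'r \<Rightarrow> real^'r \<Rightarrow> real^'n \<Rightarrow> bool" where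
  "stationary f g A B b x \<longleftrightarrow>
     (\<exists>u v z. u \<in> csubdiff f x \<and> v \<in> csubdiff g (A *v x) \<and> z \<in> subdiff_Phi_plus (B *v x - b)
        \<and> u + transpose A *v v + transpose B *v z = 0)"

definition local_minimizer :: "('a::metric_space \<Rightarrow> ereal) \<Rightarrow> 'a \<Rightarrow> bool" where
  "local_minimizer F x \<longleftrightarrow> (\<exists>e>0. \<forall>y\<in>ball x e. F x \<le> F y)"

end

theory Submission
  imports Defs
begin

text \<open>
  Part (i): at a stationary point the subgradient inequalities of \<open>f\<close> and \<open>g\<close> add up with a
  local subgradient inequality of the penalty; the latter holds near \<open>B x\<^sup>* - b\<close> because the
  penalty only jumps upwards, by at least \<open>\<lambda>\<^sub>i > 0\<close>, when an active component becomes positive.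

  Part (ii): near \<open>x\<^sup>*\<close> the inactive components keep their sign, so the penalty is constant on the
  polyhedron where the active components are nonpositive; hence \<open>x\<^sup>*\<close> minimizes \<open>f + g \<circ> A\<close>
  locally, and by convexity globally, on that polyhedron. Lifted to pairs of epigraph points this
  means that \<open>s + t\<close> is minimal over \<open>epi f \<times> epi g\<close> cut by finitely many linear constraints
  (\<open>y = A x\<close>, the active rows of \<open>B\<close>, and the facets of a polyhedral epigraph, which is therefore
  not required to have a relative interior point). A Lagrange multiplier rule for a convex set
  cut by linear constraints, assuming only that some relative interior point satisfies them, then
  gives normals \<open>(u, -1)\<close>, \<open>(v, -1)\<close> to the two epigraphs, i.e. subgradients, and nonnegative
  multipliers on the active rows: together, the stationarity condition.
\<close>

section \<open>Normal cones and Lagrange multipliers for linear constraints\<close>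

definition normal_cone :: "'a::real_inner set \<Rightarrow> 'a \<Rightarrow> 'a set" where
  "normal_cone S x = {a. \<forall>y\<in>S. a \<bullet> (y - x) \<le> 0}"

lemma normal_cone_0: "a \<in> normal_cone S 0 \<longleftrightarrow> (\<forall>y\<in>S. a \<bullet> y \<le> 0)"
  by (simp add: normal_cone_def)

lemma normal_cone_mono: "S \<subseteq> T \<Longrightarrow> normal_cone T x \<subseteq> normal_cone S x"
  by (auto simp: normal_cone_def)

lemma normal_cone_translation: "a \<in> normal_cone ((+) (- x) ` C) 0 \<longleftrightarrow> a \<in> normal_cone C x"
  by (auto simp: normal_cone_def)

lemma normal_cone_add_Int: "a \<in> normal_cone S x \<Longrightarrow> b \<in> normal_cone T x \<Longrightarrow> a + b \<in> normal_cone (S \<inter> T) x"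
  by (auto simp: normal_cone_def inner_add_left add_nonpos_nonpos)

lemma normal_cone_Times_fst: "a \<in> normal_cone (S \<times> T) (x, y) \<Longrightarrow> y \<in> T \<Longrightarrow> fst a \<in> normal_cone S x"
  by (force simp: normal_cone_def inner_prod_def)

lemma normal_cone_Times_snd: "a \<in> normal_cone (S \<times> T) (x, y) \<Longrightarrow> x \<in> S \<Longrightarrow> snd a \<in> normal_cone T y"
  by (force simp: normal_cone_def inner_prod_def)

lemma normal_cone_rel_interior_orthogonal:
  fixes C :: "'a::euclidean_space set"
  assumes "convex C" "w \<in> rel_interior C" "c \<in> normal_cone C w" "y \<in> C"
  shows "c \<bullet> (y - w) = 0"
proof -
  obtain e where "e > 1" "\<forall>e'. 1 < e' \<and> e' \<le> e \<longrightarrow> (1 - e') *\<^sub>R y + e' *\<^sub>R w \<in> C"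
    using convex_rel_interior_if[OF assms(1,2)] hull_inc[OF assms(4)] by blast
  then have "(1 - e) *\<^sub>R y + e *\<^sub>R w \<in> C" by blast
  then have "c \<bullet> ((1 - e) *\<^sub>R y + e *\<^sub>R w - w) \<le> 0"
    using assms(3) unfolding normal_cone_def by blast
  then have "(1 - e) * (c \<bullet> (y - w)) \<le> 0"
    by (simp add: algebra_simps)
  then have "0 \<le> c \<bullet> (y - w)"
    using \<open>e > 1\<close> by (simp add: mult_le_0_iff)
  moreover have "c \<bullet> (y - w) \<le> 0"
    using assms(3,4) unfolding normal_cone_def by blast
  ultimately show ?thesis by linarith
qed

lemma separation_from_vertical_ray:
  fixes G :: "('a::euclidean_space \<times> real) set"
  assumes "convex G" "(0, 0) \<in> G" "(0, -1) \<in> G" "\<And>\<epsilon>. \<epsilon> > 0 \<Longrightarrow> (0, \<epsilon>) \<notin> G"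
  obtains c \<kappa> where "\<And>y \<alpha>. (y, \<alpha>) \<in> G \<Longrightarrow> 0 \<le> c \<bullet> y + \<kappa> * \<alpha>"
    "\<And>y \<alpha>. (y, \<alpha>) \<in> rel_interior G \<Longrightarrow> 0 < c \<bullet> y + \<kappa> * \<alpha>"
proof -
  have "(0, 0) \<notin> rel_interior G"
  proof
    assume "(0, 0) \<in> rel_interior G"
    then obtain e where "e > 1" "\<forall>e'. 1 < e' \<and> e' \<le> e \<longrightarrow> (1 - e') *\<^sub>R (0, -1) + e' *\<^sub>R (0, 0) \<in> G"
      using convex_rel_interior_if[OF assms(1)] hull_inc[OF assms(3)] by blast
    then show False
      using assms(4)[of "e - 1"] by simp
  qed
  then obtain a where a: "\<And>p. p \<in> G \<Longrightarrow> a \<bullet> (0, 0) \<le> a \<bullet> p"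
    "\<And>p. p \<in> rel_interior G \<Longrightarrow> a \<bullet> (0, 0) < a \<bullet> p"
    using supporting_hyperplane_rel_boundary[OF assms(1,2)] by metis
  show ?thesis
  proof (rule that[of "fst a" "snd a"])
    show "0 \<le> fst a \<bullet> y + snd a * \<alpha>" if "(y, \<alpha>) \<in> G" for y \<alpha>
      using a(1)[OF that] by (simp add: inner_prod_def)
    show "0 < fst a \<bullet> y + snd a * \<alpha>" if "(y, \<alpha>) \<in> rel_interior G" for y \<alpha>
      using a(2)[OF that] by (simp add: inner_prod_def)
  qed
qed

lemma proper_lagrangian_separation:
  fixes C :: "'a::euclidean_space set" and D :: "'b::euclidean_space set" and L :: "'a \<Rightarrow> 'b"
  assumes L: "linear L" and C: "convex C" "0 \<in> C" and D: "convex D" "0 \<in> D"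
    and opt: "\<And>y. y \<in> C \<Longrightarrow> - L y \<in> D \<Longrightarrow> z \<bullet> y \<le> 0"
  obtains \<kappa> c where "\<kappa> \<le> 0" "\<And>y d. y \<in> C \<Longrightarrow> d \<in> D \<Longrightarrow> 0 \<le> c \<bullet> (L y + d) + \<kappa> * (z \<bullet> y)"
    "\<exists>y\<in>C. \<exists>d\<in>D. \<exists>t\<le>0. 0 < c \<bullet> (L y + d) + \<kappa> * (z \<bullet> y + t)"
proof -
  define G where "G = (\<lambda>y. (L y, z \<bullet> y)) ` C + (D \<times> {..0})"
  have G: "(L y + d, z \<bullet> y + t) \<in> G" if "y \<in> C" "d \<in> D" "t \<le> 0" for y d t
    unfolding G_def set_plus_def using that by force
  have "linear (\<lambda>y. (L y, z \<bullet> y))"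
    by (intro linearI) (simp_all add: linear_add[OF L] linear_scale[OF L] inner_add_right)
  then have "convex G"
    unfolding G_def using C D by (intro convex_set_plus convex_linear_image convex_Times) auto
  have G0: "(0, 0) \<in> G" "(0, -1) \<in> G"
    using G[OF C(2) D(2), of 0] G[OF C(2) D(2), of "-1"] by (simp_all add: linear_0[OF L])
  have ray: "(0, \<epsilon>) \<notin> G" if "\<epsilon> > 0" for \<epsilon>
  proof
    assume "(0, \<epsilon>) \<in> G"
    then obtain y d t where y: "y \<in> C" "d \<in> D" "t \<le> 0" "L y + d = 0" "z \<bullet> y + t = \<epsilon>"
      by (auto simp: G_def set_plus_def)
    then have "d = - L y"
      by (simp add: eq_neg_iff_add_eq_0 add.commute)
    then have "- L y \<in> D"
      using y(2) by simp
    then show False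
      using opt[OF y(1)] y(3,5) that by linarith
  qed
  obtain c \<kappa> where c: "\<And>y \<alpha>. (y, \<alpha>) \<in> G \<Longrightarrow> 0 \<le> c \<bullet> y + \<kappa> * \<alpha>"
      "\<And>y \<alpha>. (y, \<alpha>) \<in> rel_interior G \<Longrightarrow> 0 < c \<bullet> y + \<kappa> * \<alpha>"
    using separation_from_vertical_ray[OF \<open>convex G\<close> G0 ray] by blast
  obtain p where "p \<in> rel_interior G"
    using rel_interior_eq_empty[OF \<open>convex G\<close>] G0 by blast
  moreover from this obtain y d t where "y \<in> C" "d \<in> D" "t \<le> 0" "p = (L y + d, z \<bullet> y + t)"
    using rel_interior_subset by (force simp: G_def set_plus_def)
  ultimately have strict: "\<exists>y\<in>C. \<exists>d\<in>D. \<exists>t\<le>0. 0 < c \<bullet> (L y + d) + \<kappa> * (z \<bullet> y + t)"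
    using c(2) by blast
  have "\<kappa> \<le> 0"
    using c(1)[OF G0(2)] by simp
  moreover have "0 \<le> c \<bullet> (L y + d) + \<kappa> * (z \<bullet> y)" if "y \<in> C" "d \<in> D" for y d
    using c(1)[OF G[OF that order_refl]] by simp
  ultimately show ?thesis
    using strict by (rule that)
qed

lemma multiplier_for_strict_inequality:
  fixes C :: "'a::euclidean_space set"
  assumes "convex C" "0 \<in> C" "w \<in> C" "m \<bullet> w < 0"
    and "a \<in> normal_cone (C \<inter> {y. m \<bullet> y \<le> 0}) 0"
  shows "\<exists>\<mu>\<ge>0. a - \<mu> *\<^sub>R m \<in> normal_cone C 0"
proof -
  have lin: "linear (\<lambda>y. m \<bullet> y)"
    by (simp add: linear_iff inner_add_right)
  have opt: "a \<bullet> y \<le> 0" if "y \<in> C" "- (m \<bullet> y) \<in> {0..}" for y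
    using assms(5) that by (auto simp: normal_cone_0)
  obtain c \<kappa> where sep: "\<kappa> \<le> 0"
      "\<And>y d. y \<in> C \<Longrightarrow> d \<in> {0..} \<Longrightarrow> 0 \<le> c \<bullet> (m \<bullet> y + d) + \<kappa> * (a \<bullet> y)"
      "\<exists>y\<in>C. \<exists>d\<in>{0..}. \<exists>t\<le>0. 0 < c \<bullet> (m \<bullet> y + d) + \<kappa> * (a \<bullet> y + t)"
    using proper_lagrangian_separation[OF lin assms(1,2) convex_real_interval(1) _ opt, of 0] by blast
  have "0 \<le> c"
    using sep(2)[OF assms(2), of 1] by simp
  have "\<kappa> \<noteq> 0"
  proof
    assume "\<kappa> = 0"
    then have "0 < c"
      using sep(3) \<open>0 \<le> c\<close> by (auto simp: order.order_iff_strict)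
    then show False
      using sep(2)[OF assms(3), of 0] \<open>\<kappa> = 0\<close> mult_pos_neg[OF \<open>0 < c\<close> assms(4)] by simp
  qed
  with sep(1) have "\<kappa> < 0" by simp
  show ?thesis
  proof (intro exI conjI)
    show "0 \<le> c / - \<kappa>"
      using \<open>0 \<le> c\<close> \<open>\<kappa> < 0\<close> by (intro divide_nonneg_pos) simp_all
    have "(a - (c / - \<kappa>) *\<^sub>R m) \<bullet> y \<le> 0" if "y \<in> C" for y
    proof -
      have "(a - (c / - \<kappa>) *\<^sub>R m) \<bullet> y = (c * (m \<bullet> y) + \<kappa> * (a \<bullet> y)) / \<kappa>"
        using \<open>\<kappa> < 0\<close> by (simp add: inner_diff_left inner_add_left field_simps)
      then show ?thesis
        using sep(2)[OF that, of 0] \<open>\<kappa> < 0\<close> by (simp add: divide_nonneg_neg)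
    qed
    then show "a - (c / - \<kappa>) *\<^sub>R m \<in> normal_cone C 0"
      by (simp add: normal_cone_0)
  qed
qed

lemma multipliers_for_strict_inequalities:
  fixes C :: "'a::euclidean_space set" and m :: "'i \<Rightarrow> 'a"
  assumes "finite I" "convex C" "0 \<in> C" "w \<in> C" "\<forall>i\<in>I. m i \<bullet> w < 0"
    and "a \<in> normal_cone (C \<inter> {y. \<forall>i\<in>I. m i \<bullet> y \<le> 0}) 0"
  shows "\<exists>\<eta>. (\<forall>i\<in>I. 0 \<le> \<eta> i) \<and> a - (\<Sum>i\<in>I. \<eta> i *\<^sub>R m i) \<in> normal_cone C 0"
  using assms
proof (induction I arbitrary: C rule: finite_induct)
  case empty
  then show ?case by auto
next
  case (insert i I)
  let ?C = "C \<inter> {y. m i \<bullet> y \<le> 0}"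
  have "convex ?C"
    using insert.prems(1) by (simp add: convex_Int convex_halfspace_le)
  moreover have "a \<in> normal_cone (?C \<inter> {y. \<forall>i\<in>I. m i \<bullet> y \<le> 0}) 0"
    using insert.prems(5) by (auto simp: normal_cone_0)
  ultimately obtain \<eta> where \<eta>: "\<forall>i\<in>I. 0 \<le> \<eta> i" "a - (\<Sum>i\<in>I. \<eta> i *\<^sub>R m i) \<in> normal_cone ?C 0"
    using insert.IH[of ?C] insert.prems(2,3,4) by auto
  then obtain \<mu> where "0 \<le> \<mu>" "a - (\<Sum>i\<in>I. \<eta> i *\<^sub>R m i) - \<mu> *\<^sub>R m i \<in> normal_cone C 0"
    using multiplier_for_strict_inequality insert.prems by blast
  moreover have "(\<Sum>j\<in>insert i I. (\<eta>(i := \<mu>)) j *\<^sub>R m j) = \<mu> *\<^sub>R m i + (\<Sum>j\<in>I. \<eta> j *\<^sub>R m j)"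
    using insert.hyps by (simp, intro sum.cong) auto
  ultimately show ?case
    using \<eta>(1) by (intro exI[of _ "\<eta>(i := \<mu>)"]) (auto simp: algebra_simps)
qed

lemma span_image_finite_sum:
  fixes m :: "'i \<Rightarrow> 'a::real_vector"
  assumes "finite J" "x \<in> span (m ` J)"
  shows "\<exists>\<gamma>. x = (\<Sum>j\<in>J. \<gamma> j *\<^sub>R m j)"
  using assms
proof (induction J arbitrary: x rule: finite_induct)
  case empty
  then show ?case by simp
next
  case (insert j J)
  then obtain k where "x - k *\<^sub>R m j \<in> span (m ` J)"
    by (auto simp: span_insert)
  then obtain \<gamma> where "x - k *\<^sub>R m j = (\<Sum>i\<in>J. \<gamma> i *\<^sub>R m i)"
    using insert.IH by blast
  moreover have "(\<Sum>i\<in>insert j J. (\<gamma>(j := k)) i *\<^sub>R m i) = k *\<^sub>R m j + (\<Sum>i\<in>J. \<gamma> i *\<^sub>R m i)"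
    using insert.hyps by (simp, intro sum.cong) auto
  ultimately show ?case
    by (intro exI[of _ "\<gamma>(j := k)"]) (simp add: algebra_simps)
qed

lemma orthogonal_to_kernel_imp_finite_sum:
  fixes m :: "'i \<Rightarrow> 'a::euclidean_space"
  assumes "finite J" "\<And>y. \<forall>j\<in>J. m j \<bullet> y = 0 \<Longrightarrow> c \<bullet> y = 0"
  shows "\<exists>\<gamma>. c = (\<Sum>j\<in>J. \<gamma> j *\<^sub>R m j)"
proof -
  have "y \<bullet> c = 0" if "y \<in> (span (m ` J))\<^sup>\<bottom>" for y
  proof -
    have "\<forall>j\<in>J. m j \<bullet> y = 0"
      using that span_base[of _ "m ` J"] by (auto simp: orthogonal_comp_def orthogonal_def)
    then have "c \<bullet> y = 0"
      by (rule assms(2))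
    then show ?thesis
      by (simp add: inner_commute)
  qed
  then have "c \<in> (span (m ` J))\<^sup>\<bottom>\<^sup>\<bottom>"
    by (simp add: orthogonal_comp_def orthogonal_def)
  then have "c \<in> span (m ` J)"
    by (simp add: orthogonal_comp_self)
  then show ?thesis
    using span_image_finite_sum[OF assms(1)] by blast
qed

lemma multipliers_for_equalities:
  fixes C :: "'a::euclidean_space set" and m :: "'i \<Rightarrow> 'a"
  assumes "finite J" "convex C" "0 \<in> C" "w \<in> rel_interior C" "\<forall>j\<in>J. m j \<bullet> w = 0"
    and "z \<in> normal_cone (C \<inter> {y. \<forall>j\<in>J. m j \<bullet> y = 0}) 0"
  shows "\<exists>\<gamma>. z - (\<Sum>j\<in>J. \<gamma> j *\<^sub>R m j) \<in> normal_cone C 0"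
proof -
  define E where "E = {y. \<forall>j\<in>J. m j \<bullet> y = 0}"
  have "convex E" "0 \<in> E" and Ew: "w \<in> E" and E_uminus: "\<And>e. e \<in> E \<Longrightarrow> - e \<in> E"
    using assms(5) by (auto simp: E_def convex_def inner_add_right)
  have lin: "linear (\<lambda>y::'a. y)"
    by (simp add: linear_iff)
  have opt: "z \<bullet> y \<le> 0" if "y \<in> C" "- y \<in> E" for y
    using assms(6) that E_uminus[of "- y"] by (auto simp: normal_cone_0 E_def)
  obtain c \<kappa> where sep: "\<kappa> \<le> 0"
      "\<And>y e. y \<in> C \<Longrightarrow> e \<in> E \<Longrightarrow> 0 \<le> c \<bullet> (y + e) + \<kappa> * (z \<bullet> y)"
      "\<exists>y\<in>C. \<exists>e\<in>E. \<exists>t\<le>0. 0 < c \<bullet> (y + e) + \<kappa> * (z \<bullet> y + t)"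
    using proper_lagrangian_separation[OF lin assms(2,3) \<open>convex E\<close> \<open>0 \<in> E\<close> opt] by blast
  have cE: "c \<bullet> e = 0" if "e \<in> E" for e
    using sep(2)[OF assms(3) that] sep(2)[OF assms(3) E_uminus[OF that]] by simp
  have cC: "0 \<le> c \<bullet> y + \<kappa> * (z \<bullet> y)" if "y \<in> C" for y
    using sep(2)[OF that \<open>0 \<in> E\<close>] by simp
  have "\<kappa> \<noteq> 0"
  proof
    assume "\<kappa> = 0"
    then have "- c \<in> normal_cone C w"
      using cC cE[OF Ew] by (simp add: normal_cone_def inner_diff_right)
    from normal_cone_rel_interior_orthogonal[OF assms(2,4) this]
    have "c \<bullet> y = 0" if "y \<in> C" for y
      using that cE[OF Ew] by (simp add: inner_diff_right)
    then show False
      using sep(3) cE \<open>\<kappa> = 0\<close> by (auto simp: inner_add_right)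
  qed
  with sep(1) have "\<kappa> < 0" by simp
  obtain \<gamma> where \<gamma>: "(- 1 / \<kappa>) *\<^sub>R c = (\<Sum>j\<in>J. \<gamma> j *\<^sub>R m j)"
    using orthogonal_to_kernel_imp_finite_sum[OF assms(1), of m "(- 1 / \<kappa>) *\<^sub>R c"] cE
    by (auto simp: E_def)
  have "(z - (- 1 / \<kappa>) *\<^sub>R c) \<bullet> y \<le> 0" if "y \<in> C" for y
  proof -
    have "(z - (- 1 / \<kappa>) *\<^sub>R c) \<bullet> y = (c \<bullet> y + \<kappa> * (z \<bullet> y)) / \<kappa>"
      using \<open>\<kappa> < 0\<close> by (simp add: inner_diff_left inner_add_left field_simps)
    then show ?thesis
      using cC[OF that] \<open>\<kappa> < 0\<close> by (simp add: divide_nonneg_neg)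
  qed
  then have "z - (\<Sum>j\<in>J. \<gamma> j *\<^sub>R m j) \<in> normal_cone C 0"
    unfolding \<gamma>[symmetric] by (simp add: normal_cone_0)
  then show ?thesis by blast
qed

lemma multipliers_under_strict_Slater:
  fixes C :: "'a::euclidean_space set" and m :: "'i \<Rightarrow> 'a"
  assumes "finite I" "finite J" "convex C" "0 \<in> C" "w \<in> rel_interior C"
    "\<forall>i\<in>I. m i \<bullet> w < 0" "\<forall>j\<in>J. m j \<bullet> w = 0"
    and "z \<in> normal_cone (C \<inter> {y. (\<forall>i\<in>I. m i \<bullet> y \<le> 0) \<and> (\<forall>j\<in>J. m j \<bullet> y = 0)}) 0"
  shows "\<exists>\<eta> \<gamma>. (\<forall>i\<in>I. 0 \<le> \<eta> i) \<and> z - (\<Sum>i\<in>I. \<eta> i *\<^sub>R m i) - (\<Sum>j\<in>J. \<gamma> j *\<^sub>R m j) \<in> normal_cone C 0"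
proof -
  let ?E = "{y. \<forall>j\<in>J. m j \<bullet> y = 0}"
  have "convex (C \<inter> ?E)"
    using assms(3) by (intro convex_Int) (auto simp: convex_def inner_add_right)
  moreover have "z \<in> normal_cone (C \<inter> ?E \<inter> {y. \<forall>i\<in>I. m i \<bullet> y \<le> 0}) 0"
    using assms(8) by (auto simp: normal_cone_0)
  moreover have "0 \<in> C \<inter> ?E" "w \<in> C \<inter> ?E"
    using assms(4,5,7) rel_interior_subset by auto
  ultimately obtain \<eta> where \<eta>: "\<forall>i\<in>I. 0 \<le> \<eta> i" "z - (\<Sum>i\<in>I. \<eta> i *\<^sub>R m i) \<in> normal_cone (C \<inter> ?E) 0"
    using multipliers_for_strict_inequalities[OF assms(1) _ _ _ assms(6)] by blast
  then obtain \<gamma> where "z - (\<Sum>i\<in>I. \<eta> i *\<^sub>R m i) - (\<Sum>j\<in>J. \<gamma> j *\<^sub>R m j) \<in> normal_cone C 0"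
    using multipliers_for_equalities[OF assms(2,3,4,5,7)] by blast
  then show ?thesis
    using \<eta>(1) by blast
qed

lemma convex_hull_image_finite_sum:
  fixes m :: "'i \<Rightarrow> 'a::real_vector"
  assumes "finite T" "x \<in> convex hull (m ` T)"
  shows "\<exists>\<eta>. (\<forall>i\<in>T. 0 \<le> \<eta> i) \<and> sum \<eta> T = 1 \<and> x = (\<Sum>i\<in>T. \<eta> i *\<^sub>R m i)"
  using assms
proof (induction T arbitrary: x rule: finite_induct)
  case empty
  then show ?case by simp
next
  case (insert i T)
  show ?case
  proof (cases "T = {}")
    case True
    then show ?thesis
      using insert.prems by (intro exI[of _ "\<lambda>_. 1"]) simp
  next
    case False
    then obtain u v y where uv: "0 \<le> u" "0 \<le> v" "u + v = 1" "y \<in> convex hull (m ` T)"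
      "x = u *\<^sub>R m i + v *\<^sub>R y"
      using insert.prems by (auto simp: convex_hull_insert)
    obtain \<eta> where \<eta>: "\<forall>i\<in>T. 0 \<le> \<eta> i" "sum \<eta> T = 1" "y = (\<Sum>i\<in>T. \<eta> i *\<^sub>R m i)"
      using insert.IH[OF uv(4)] by blast
    define \<eta>' where "\<eta>' = (\<lambda>j. v * \<eta> j)(i := u)"
    have "sum \<eta>' T = v * sum \<eta> T" "(\<Sum>j\<in>T. \<eta>' j *\<^sub>R m j) = v *\<^sub>R (\<Sum>j\<in>T. \<eta> j *\<^sub>R m j)"
      unfolding \<eta>'_def using insert.hyps
      by (simp_all add: sum_distrib_left scaleR_sum_right, (intro sum.cong; auto)+)
    then show ?thesis
      using insert.hyps \<eta> uv by (intro exI[of _ \<eta>']) (auto simp: \<eta>'_def)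
  qed
qed

lemma convex_hull_image_positive_sum:
  fixes m :: "'i \<Rightarrow> 'a::real_vector"
  assumes "finite T" "x \<in> convex hull (m ` T)"
  obtains S \<eta> where "S \<subseteq> T" "S \<noteq> {}" "\<forall>i\<in>S. 0 < \<eta> i" "x = (\<Sum>i\<in>S. \<eta> i *\<^sub>R m i)"
proof -
  obtain \<eta> where \<eta>: "\<forall>i\<in>T. 0 \<le> \<eta> i" "sum \<eta> T = 1" "x = (\<Sum>i\<in>T. \<eta> i *\<^sub>R m i)"
    using convex_hull_image_finite_sum[OF assms] by blast
  define S where "S = {i\<in>T. 0 < \<eta> i}"
  have "S \<noteq> {}"
  proof
    assume "S = {}"
    then have "\<forall>i\<in>T. \<eta> i = 0"
      using \<eta>(1) by (force simp: S_def)
    then show False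
      using \<eta>(2) by simp
  qed
  moreover have "S \<subseteq> T" "\<forall>i\<in>S. 0 < \<eta> i"
    by (auto simp: S_def)
  moreover have "x = (\<Sum>i\<in>S. \<eta> i *\<^sub>R m i)"
    unfolding \<eta>(3) using assms(1) \<eta>(1) by (intro sum.mono_neutral_right) (auto simp: S_def)
  ultimately show ?thesis
    using that by blast
qed

lemma gordan_alternative:
  fixes Y :: "'a::euclidean_space set" and m :: "'i \<Rightarrow> 'a"
  assumes "subspace Y" "finite T" "T \<noteq> {}"
  shows "(\<exists>d. (\<forall>y\<in>Y. y \<bullet> d = 0) \<and> (\<forall>i\<in>T. m i \<bullet> d < 0))
    \<or> (\<exists>S \<eta>. S \<subseteq> T \<and> S \<noteq> {} \<and> (\<forall>i\<in>S. 0 < \<eta> i) \<and> (\<Sum>i\<in>S. \<eta> i *\<^sub>R m i) \<in> Y)"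
proof (cases "0 \<in> convex hull (m ` T) + Y")
  case True
  then obtain x y where "x \<in> convex hull (m ` T)" "y \<in> Y" "x + y = 0"
    by (auto simp: set_plus_def)
  moreover obtain S \<eta> where "S \<subseteq> T" "S \<noteq> {}" "\<forall>i\<in>S. 0 < \<eta> i" "x = (\<Sum>i\<in>S. \<eta> i *\<^sub>R m i)"
    using convex_hull_image_positive_sum[OF assms(2)] calculation(1) by blast
  moreover have "x = - y"
    using \<open>x + y = 0\<close> by (simp add: eq_neg_iff_add_eq_0)
  then have "x \<in> Y"
    using subspace_neg[OF assms(1) \<open>y \<in> Y\<close>] by simp
  ultimately show ?thesis
    by blast
next
  case False
  let ?X = "convex hull (m ` T) + Y"
  have mX: "m i + y \<in> ?X" if "i \<in> T" "y \<in> Y" for i y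
    using that by (intro set_plus_intro hull_inc) auto
  have "?X = (\<Union>x\<in>convex hull (m ` T). \<Union>y\<in>Y. {x + y})"
    by (auto simp: set_plus_def)
  then have "closed ?X"
    using compact_closed_sums[OF compact_convex_hull closed_subspace[OF assms(1)]]
      finite_imp_compact[OF finite_imageI[OF assms(2), of m]] by simp
  moreover have "convex ?X"
    using assms(1) by (intro convex_set_plus convex_convex_hull subspace_imp_convex)
  ultimately obtain a b where ab: "0 < b" "\<forall>x\<in>?X. b < a \<bullet> x"
    using separating_hyperplane_closed_0 False by blast
  obtain i0 where "i0 \<in> T"
    using assms(3) by blast
  have "a \<bullet> y = 0" if "y \<in> Y" for y
  proof (rule ccontr)
    assume "a \<bullet> y \<noteq> 0"
    define t where "t = (b - a \<bullet> m i0) / (a \<bullet> y)"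
    have "b < a \<bullet> (m i0 + t *\<^sub>R y)"
      using ab(2) mX[OF \<open>i0 \<in> T\<close> subspace_scale[OF assms(1) that]] by blast
    moreover have "a \<bullet> (m i0 + t *\<^sub>R y) = b"
      unfolding t_def using \<open>a \<bullet> y \<noteq> 0\<close> by (simp add: inner_add_right)
    ultimately show False by simp
  qed
  then have "\<forall>y\<in>Y. y \<bullet> (- a) = 0"
    by (simp add: inner_commute)
  moreover have "m i \<bullet> (- a) < 0" if "i \<in> T" for i
  proof -
    have "b < a \<bullet> m i"
      using ab(2) mX[OF that subspace_0[OF assms(1)]] by simp
    then show ?thesis
      using ab(1) by (simp add: inner_commute)
  qed
  ultimately show ?thesis
    by blast
qed

lemma gordan_alternative_for_constraints:
  fixes C :: "'a::euclidean_space set" and m :: "'i \<Rightarrow> 'a"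
  assumes "finite T" "T \<noteq> {}" "finite J"
  shows "(\<exists>d\<in>span C. (\<forall>j\<in>J. m j \<bullet> d = 0) \<and> (\<forall>i\<in>T. m i \<bullet> d < 0))
    \<or> (\<exists>S \<eta> \<rho> \<gamma>. S \<subseteq> T \<and> S \<noteq> {} \<and> (\<forall>i\<in>S. 0 < \<eta> i) \<and> \<rho> \<in> C\<^sup>\<bottom>
        \<and> (\<Sum>i\<in>S. \<eta> i *\<^sub>R m i) = \<rho> + (\<Sum>j\<in>J. \<gamma> j *\<^sub>R m j))"
proof -
  define Y where "Y = {\<rho> + s |\<rho> s. \<rho> \<in> C\<^sup>\<bottom> \<and> s \<in> span (m ` J)}"
  have "subspace Y"
    unfolding Y_def by (intro subspace_sums subspace_orthogonal_comp subspace_span)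
  from gordan_alternative[OF this assms(1,2), of m] show ?thesis
  proof (elim disjE exE conjE)
    fix d assume d: "\<forall>y\<in>Y. y \<bullet> d = 0" "\<forall>i\<in>T. m i \<bullet> d < 0"
    have "\<rho> \<bullet> d = 0" if "\<rho> \<in> C\<^sup>\<bottom>" for \<rho>
    proof -
      have "\<rho> + 0 \<in> Y"
        unfolding Y_def using that span_zero by blast
      then show ?thesis
        using d(1) by simp
    qed
    then have "d \<in> C\<^sup>\<bottom>\<^sup>\<bottom>"
      by (simp add: orthogonal_comp_def orthogonal_def)
    moreover have "C\<^sup>\<bottom>\<^sup>\<bottom> \<subseteq> span C"
      using orthogonal_comp_anti_mono[OF orthogonal_comp_anti_mono[OF span_superset[of C]]]
      by (simp add: orthogonal_comp_self)
    moreover have "m j \<bullet> d = 0" if "j \<in> J" for j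
    proof -
      have "0 + m j \<in> Y"
        unfolding Y_def using that subspace_0[OF subspace_orthogonal_comp] span_base by blast
      then show ?thesis
        using d(1) by simp
    qed
    ultimately show ?thesis
      using d(2) by blast
  next
    fix S \<eta> assume S: "S \<subseteq> T" "S \<noteq> {}" "\<forall>i\<in>S. 0 < \<eta> i" "(\<Sum>i\<in>S. \<eta> i *\<^sub>R m i) \<in> Y"
    then obtain \<rho> s where "\<rho> \<in> C\<^sup>\<bottom>" "s \<in> span (m ` J)" "(\<Sum>i\<in>S. \<eta> i *\<^sub>R m i) = \<rho> + s"
      unfolding Y_def by blast
    moreover obtain \<gamma> where "s = (\<Sum>j\<in>J. \<gamma> j *\<^sub>R m j)"
      using span_image_finite_sum[OF assms(3) calculation(2)] by blast
    ultimately show ?thesis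
      using S(1-3) by blast
  qed
qed

lemma eventually_at_right_0_witness:
  assumes "\<forall>\<^sub>F \<theta> in at_right (0::real). P \<theta>"
  obtains \<theta> where "0 < \<theta>" "\<theta> < 1" "P \<theta>"
proof -
  have "\<forall>\<^sub>F \<theta> in at_right (0::real). 0 < \<theta> \<and> \<theta> < 1"
    by (auto simp: eventually_at_right[OF zero_less_one] intro!: exI[of _ 1])
  with assms have "\<forall>\<^sub>F \<theta> in at_right (0::real). P \<theta> \<and> 0 < \<theta> \<and> \<theta> < 1"
    by (rule eventually_conj)
  then show ?thesis
    using eventually_happens[of _ "at_right (0::real)"] that by auto
qed

lemma eventually_rel_interior_add:
  fixes C :: "'a::euclidean_space set"
  assumes "0 \<in> C" "w \<in> rel_interior C" "d \<in> span C"
  shows "\<forall>\<^sub>F \<epsilon> in at_right 0. w + \<epsilon> *\<^sub>R d \<in> rel_interior C"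
proof -
  obtain e where "e > 0" and e: "ball w e \<inter> affine hull C \<subseteq> rel_interior C"
    using openin_rel_interior[of C] assms(2) unfolding openin_contains_ball by blast
  have "affine hull C = span C"
    using assms(1) by (intro affine_hull_span_0) (simp add: hull_inc)
  moreover have "w \<in> span C"
    using assms(2) rel_interior_subset span_superset by blast
  ultimately have aff: "w + \<epsilon> *\<^sub>R d \<in> affine hull C" for \<epsilon>
    using assms(3) by (simp add: span_add span_scale)
  have "((\<lambda>\<epsilon>. w + \<epsilon> *\<^sub>R d) \<longlongrightarrow> w + 0 *\<^sub>R d) (at_right 0)"
    by (intro tendsto_intros)
  then have "\<forall>\<^sub>F \<epsilon> in at_right 0. dist (w + \<epsilon> *\<^sub>R d) w < e"
    using \<open>e > 0\<close> tendstoD by fastforce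
  then show ?thesis
    by (rule eventually_mono) (use e aff in \<open>auto simp: dist_commute\<close>)
qed

lemma strict_Slater_point_by_perturbation:
  fixes C :: "'a::euclidean_space set" and m :: "'i \<Rightarrow> 'a"
  assumes "0 \<in> C" "w \<in> rel_interior C" "finite I" "\<forall>i\<in>I. m i \<bullet> w \<le> 0" "\<forall>j\<in>J. m j \<bullet> w = 0"
    and "d \<in> span C" "\<forall>j\<in>J. m j \<bullet> d = 0" "\<forall>i\<in>I. m i \<bullet> w = 0 \<longrightarrow> m i \<bullet> d < 0"
  obtains w' where "w' \<in> rel_interior C" "\<forall>i\<in>I. m i \<bullet> w' < 0" "\<forall>j\<in>J. m j \<bullet> w' = 0"
proof -
  have "\<forall>\<^sub>F \<epsilon> in at_right 0. m i \<bullet> (w + \<epsilon> *\<^sub>R d) < 0" if "i \<in> I" for i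
  proof (cases "m i \<bullet> w = 0")
    case True
    then show ?thesis
      using assms(8) that eventually_at_right_less[of 0]
      by (auto elim!: eventually_mono simp: inner_add_right mult_pos_neg)
  next
    case False
    then have "m i \<bullet> w < 0"
      using assms(4) that by force
    moreover have "((\<lambda>\<epsilon>. m i \<bullet> (w + \<epsilon> *\<^sub>R d)) \<longlongrightarrow> m i \<bullet> (w + 0 *\<^sub>R d)) (at_right 0)"
      by (intro tendsto_intros)
    ultimately show ?thesis
      by (intro order_tendstoD(2)) auto
  qed
  then have "\<forall>\<^sub>F \<epsilon> in at_right 0. \<forall>i\<in>I. m i \<bullet> (w + \<epsilon> *\<^sub>R d) < 0"
    by (simp add: eventually_ball_finite_distrib[OF assms(3)])
  moreover have "\<forall>\<^sub>F \<epsilon> in at_right (0::real). w + \<epsilon> *\<^sub>R d \<in> rel_interior C"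
    using eventually_rel_interior_add[OF assms(1,2,6)] .
  ultimately have "\<forall>\<^sub>F \<epsilon> in at_right (0::real).
      (\<forall>i\<in>I. m i \<bullet> (w + \<epsilon> *\<^sub>R d) < 0) \<and> w + \<epsilon> *\<^sub>R d \<in> rel_interior C"
    by (rule eventually_conj)
  then obtain \<epsilon> where "w + \<epsilon> *\<^sub>R d \<in> rel_interior C" "\<forall>i\<in>I. m i \<bullet> (w + \<epsilon> *\<^sub>R d) < 0"
    by (rule eventually_at_right_0_witness) blast
  moreover have "\<forall>j\<in>J. m j \<bullet> (w + \<epsilon> *\<^sub>R d) = 0"
    using assms(5,7) by (simp add: inner_add_right)
  ultimately show ?thesis
    using that by blast
qed

lemma nonneg_multipliers_by_shift:
  fixes m :: "'i \<Rightarrow> 'a::real_vector"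
  assumes "finite I" "finite J" "S \<subseteq> I" "I \<inter> J = {}" "\<forall>i\<in>S. 0 < \<eta> i" "\<forall>i\<in>I - S. 0 \<le> \<eta>' i"
  obtains t \<eta>'' \<gamma>'' where "\<forall>i\<in>I. 0 \<le> \<eta>'' i"
    "(\<Sum>i\<in>I. \<eta>'' i *\<^sub>R m i) + (\<Sum>j\<in>J. \<gamma>'' j *\<^sub>R m j)
      = (\<Sum>i\<in>I - S. \<eta>' i *\<^sub>R m i) + (\<Sum>j\<in>J \<union> S. \<gamma>' j *\<^sub>R m j)
        + t *\<^sub>R ((\<Sum>i\<in>S. \<eta> i *\<^sub>R m i) - (\<Sum>j\<in>J. \<gamma> j *\<^sub>R m j))"
proof -
  define t where "t = (\<Sum>i\<in>S. \<bar>\<gamma>' i\<bar> / \<eta> i)"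
  define \<eta>'' where "\<eta>'' i = (if i \<in> S then \<gamma>' i + t * \<eta> i else \<eta>' i)" for i
  have finS: "finite S"
    using assms(1,3) finite_subset by blast
  have "\<bar>\<gamma>' i\<bar> \<le> t * \<eta> i" if "i \<in> S" for i
  proof -
    have "\<bar>\<gamma>' i\<bar> / \<eta> i \<le> t"
      unfolding t_def using assms(5) finS that by (intro member_le_sum) auto
    then show ?thesis
      using assms(5) that by (simp add: divide_le_eq)
  qed
  then have "\<forall>i\<in>I. 0 \<le> \<eta>'' i"
    using assms(6) by (force simp: \<eta>''_def)
  moreover have "(\<Sum>i\<in>I. \<eta>'' i *\<^sub>R m i)
      = (\<Sum>i\<in>I - S. \<eta>' i *\<^sub>R m i) + (\<Sum>i\<in>S. \<gamma>' i *\<^sub>R m i) + t *\<^sub>R (\<Sum>i\<in>S. \<eta> i *\<^sub>R m i)"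
  proof -
    have "(\<Sum>i\<in>I. \<eta>'' i *\<^sub>R m i) = (\<Sum>i\<in>I - S. \<eta>'' i *\<^sub>R m i) + (\<Sum>i\<in>S. \<eta>'' i *\<^sub>R m i)"
      using assms(1,3) by (metis sum.subset_diff)
    also have "\<dots> = (\<Sum>i\<in>I - S. \<eta>' i *\<^sub>R m i) + (\<Sum>i\<in>S. (\<gamma>' i + t * \<eta> i) *\<^sub>R m i)"
      by (intro arg_cong2[where f = "(+)"] sum.cong) (auto simp: \<eta>''_def)
    finally show ?thesis
      by (simp add: scaleR_add_left sum.distrib scaleR_sum_right)
  qed
  moreover have "(\<Sum>j\<in>J \<union> S. \<gamma>' j *\<^sub>R m j) = (\<Sum>j\<in>J. \<gamma>' j *\<^sub>R m j) + (\<Sum>j\<in>S. \<gamma>' j *\<^sub>R m j)"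
    using assms(2-4) finS by (intro sum.union_disjoint) auto
  ultimately show ?thesis
    by (intro that[of \<eta>'' "\<lambda>j. \<gamma>' j - t * \<gamma> j" t])
      (simp_all add: sum_subtractf scaleR_sum_right algebra_simps)
qed

lemma multipliers_shift_along_dependence:
  fixes C :: "'a::euclidean_space set" and m :: "'i \<Rightarrow> 'a"
  assumes "finite I" "finite J" "S \<subseteq> I" "I \<inter> J = {}" "\<forall>i\<in>S. 0 < \<eta> i"
    and dep: "\<rho> \<in> C\<^sup>\<bottom>" "(\<Sum>i\<in>S. \<eta> i *\<^sub>R m i) = \<rho> + (\<Sum>j\<in>J. \<gamma> j *\<^sub>R m j)"
    and mult: "\<forall>i\<in>I - S. 0 \<le> \<eta>' i"
      "z - (\<Sum>i\<in>I - S. \<eta>' i *\<^sub>R m i) - (\<Sum>j\<in>J \<union> S. \<gamma>' j *\<^sub>R m j) \<in> normal_cone C 0"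
  shows "\<exists>\<eta> \<gamma>. (\<forall>i\<in>I. 0 \<le> \<eta> i) \<and> z - (\<Sum>i\<in>I. \<eta> i *\<^sub>R m i) - (\<Sum>j\<in>J. \<gamma> j *\<^sub>R m j) \<in> normal_cone C 0"
proof -
  obtain t \<eta>'' \<gamma>'' where \<eta>'': "\<forall>i\<in>I. 0 \<le> \<eta>'' i"
    "(\<Sum>i\<in>I. \<eta>'' i *\<^sub>R m i) + (\<Sum>j\<in>J. \<gamma>'' j *\<^sub>R m j)
      = (\<Sum>i\<in>I - S. \<eta>' i *\<^sub>R m i) + (\<Sum>j\<in>J \<union> S. \<gamma>' j *\<^sub>R m j)
        + t *\<^sub>R ((\<Sum>i\<in>S. \<eta> i *\<^sub>R m i) - (\<Sum>j\<in>J. \<gamma> j *\<^sub>R m j))"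
    by (rule nonneg_multipliers_by_shift[OF assms(1-5) mult(1)])
  have "z - (\<Sum>i\<in>I. \<eta>'' i *\<^sub>R m i) - (\<Sum>j\<in>J. \<gamma>'' j *\<^sub>R m j)
      = (z - (\<Sum>i\<in>I - S. \<eta>' i *\<^sub>R m i) - (\<Sum>j\<in>J \<union> S. \<gamma>' j *\<^sub>R m j)) - t *\<^sub>R \<rho>"
  proof -
    have \<rho>: "\<rho> = (\<Sum>i\<in>S. \<eta> i *\<^sub>R m i) - (\<Sum>j\<in>J. \<gamma> j *\<^sub>R m j)"
      using dep(2) by (simp add: algebra_simps)
    show ?thesis
      using \<eta>''(2) unfolding \<rho> by (simp add: algebra_simps)
  qed
  also have "\<dots> \<in> normal_cone C 0"
  proof -
    have "\<rho> \<bullet> y = 0" if "y \<in> C" for y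
      using dep(1) that inner_commute[of \<rho> y] by (simp add: orthogonal_comp_def orthogonal_def)
    then show ?thesis
      using mult(2) by (simp add: normal_cone_0 inner_diff_left)
  qed
  finally show ?thesis
    using \<eta>''(1) by blast
qed

lemma multipliers_for_homogeneous_constraints:
  fixes C :: "'a::euclidean_space set" and m :: "'i \<Rightarrow> 'a"
  assumes "convex C" "0 \<in> C" "w \<in> rel_interior C"
    and "finite I" "finite J" "I \<inter> J = {}" "\<forall>i\<in>I. m i \<bullet> w \<le> 0" "\<forall>j\<in>J. m j \<bullet> w = 0"
    and "z \<in> normal_cone (C \<inter> {y. (\<forall>i\<in>I. m i \<bullet> y \<le> 0) \<and> (\<forall>j\<in>J. m j \<bullet> y = 0)}) 0"
  shows "\<exists>\<eta> \<gamma>. (\<forall>i\<in>I. 0 \<le> \<eta> i) \<and> z - (\<Sum>i\<in>I. \<eta> i *\<^sub>R m i) - (\<Sum>j\<in>J. \<gamma> j *\<^sub>R m j) \<in> normal_cone C 0"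
  using assms(4-)
proof (induction I arbitrary: J rule: finite_psubset_induct)
  case (psubset I)
  define T where "T = {i\<in>I. m i \<bullet> w = 0}"
  have "finite T"
    using psubset.hyps by (simp add: T_def)
  show ?case
  proof (cases "T = {}")
    case True
    then have "\<forall>i\<in>I. m i \<bullet> w < 0"
      using psubset.prems(3) by (force simp: T_def)
    then show ?thesis
      using multipliers_under_strict_Slater[OF psubset.hyps(1) psubset.prems(1) assms(1-3)] psubset.prems
      by blast
  next
    case False
    \<comment> \<open>Either \<open>w\<close> can be moved inside \<open>rel_interior C\<close> so that all tight constraints become strict,
      or a positive combination of tight constraints vanishes on \<open>C\<close> modulo the equalities; those
      constraints are then implicit equalities, and the induction hypothesis applies once they are
      moved to \<open>J\<close>.\<close>
    from gordan_alternative_for_constraints[OF \<open>finite T\<close> False psubset.prems(1), of C m]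
    show ?thesis
    proof (elim disjE exE conjE bexE)
      fix d assume d: "d \<in> span C" "\<forall>j\<in>J. m j \<bullet> d = 0" "\<forall>i\<in>T. m i \<bullet> d < 0"
      have "\<forall>i\<in>I. m i \<bullet> w = 0 \<longrightarrow> m i \<bullet> d < 0"
        using d(3) by (simp add: T_def)
      with d(1,2) obtain w' where "w' \<in> rel_interior C" "\<forall>i\<in>I. m i \<bullet> w' < 0" "\<forall>j\<in>J. m j \<bullet> w' = 0"
        by (rule strict_Slater_point_by_perturbation[OF assms(2,3) psubset.hyps(1) psubset.prems(3,4)])
      then show ?thesis
        using multipliers_under_strict_Slater[OF psubset.hyps(1) psubset.prems(1) assms(1,2)] psubset.prems
        by blast
    next
      fix S \<eta> \<rho> \<gamma>
      assume S: "S \<subseteq> T" "S \<noteq> {}" "\<forall>i\<in>S. 0 < \<eta> i"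
        and dep: "\<rho> \<in> C\<^sup>\<bottom>" "(\<Sum>i\<in>S. \<eta> i *\<^sub>R m i) = \<rho> + (\<Sum>j\<in>J. \<gamma> j *\<^sub>R m j)"
      have "S \<subseteq> I"
        using S(1) by (auto simp: T_def)
      have "I - S \<subset> I"
        using \<open>S \<subseteq> I\<close> S(2) by blast
      moreover have "finite (J \<union> S)" and "(I - S) \<inter> (J \<union> S) = {}"
        and "\<forall>i\<in>I - S. m i \<bullet> w \<le> 0" and "\<forall>j\<in>J \<union> S. m j \<bullet> w = 0"
        using psubset.prems(1-4) S(1) \<open>S \<subseteq> I\<close> finite_subset[OF \<open>S \<subseteq> I\<close> psubset.hyps(1)]
        by (auto simp: T_def)
      moreover have "z \<in> normal_cone (C \<inter> {y. (\<forall>i\<in>I - S. m i \<bullet> y \<le> 0) \<and> (\<forall>j\<in>J \<union> S. m j \<bullet> y = 0)}) 0"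
        using psubset.prems(5) by (rule subsetD[OF normal_cone_mono, rotated]) force
      ultimately have "\<exists>\<eta>' \<gamma>'. (\<forall>i\<in>I - S. 0 \<le> \<eta>' i)
          \<and> z - (\<Sum>i\<in>I - S. \<eta>' i *\<^sub>R m i) - (\<Sum>j\<in>J \<union> S. \<gamma>' j *\<^sub>R m j) \<in> normal_cone C 0"
        by (rule psubset.IH)
      then show ?thesis
        using multipliers_shift_along_dependence[OF psubset.hyps(1) psubset.prems(1) \<open>S \<subseteq> I\<close>
            psubset.prems(2) S(3) dep] by blast
    qed
  qed
qed

lemma normal_cone_active_constraints:
  fixes C :: "'a::euclidean_space set" and m :: "'k \<Rightarrow> 'a" and e :: "'j \<Rightarrow> 'a"
    and K :: "'k set" and J :: "'j set" and \<beta> :: "'k \<Rightarrow> real" and \<delta> :: "'j \<Rightarrow> real"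
  defines "P \<equiv> {y. (\<forall>k\<in>K. m k \<bullet> y \<le> \<beta> k) \<and> (\<forall>j\<in>J. e j \<bullet> y = \<delta> j)}"
  assumes C: "convex C" and K: "finite K" and x: "x \<in> C \<inter> P" and z: "z \<in> normal_cone (C \<inter> P) x"
  shows "z \<in> normal_cone ((+) (- x) ` C \<inter>
    {y. (\<forall>k\<in>K. m k \<bullet> x = \<beta> k \<longrightarrow> m k \<bullet> y \<le> 0) \<and> (\<forall>j\<in>J. e j \<bullet> y = 0)}) 0"
  unfolding normal_cone_0
proof (intro ballI, elim IntE)
  fix v assume "v \<in> (+) (- x) ` C"
    and v: "v \<in> {y. (\<forall>k\<in>K. m k \<bullet> x = \<beta> k \<longrightarrow> m k \<bullet> y \<le> 0) \<and> (\<forall>j\<in>J. e j \<bullet> y = 0)}"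
  then obtain y where "y \<in> C" "v = y - x"
    by auto
  have "\<forall>\<^sub>F \<theta> in at_right 0. m k \<bullet> x + \<theta> * (m k \<bullet> v) \<le> \<beta> k" if "k \<in> K" for k
  proof (cases "m k \<bullet> x = \<beta> k")
    case True
    then show ?thesis
      using v that eventually_at_right_less[of 0]
      by (auto elim!: eventually_mono simp: mult_nonneg_nonpos)
  next
    case False
    then have "m k \<bullet> x < \<beta> k"
      using x that by (force simp: P_def)
    moreover have "((\<lambda>\<theta>. m k \<bullet> x + \<theta> * (m k \<bullet> v)) \<longlongrightarrow> m k \<bullet> x + 0 * (m k \<bullet> v)) (at_right 0)"
      by (intro tendsto_intros)
    ultimately show ?thesis
      by (auto dest: order_tendstoD(2) elim!: eventually_mono)
  qed
  then have "\<forall>\<^sub>F \<theta> in at_right 0. \<forall>k\<in>K. m k \<bullet> x + \<theta> * (m k \<bullet> v) \<le> \<beta> k"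
    by (simp add: eventually_ball_finite_distrib[OF K])
  then obtain \<theta> where \<theta>: "0 < \<theta>" "\<theta> < 1" "\<forall>k\<in>K. m k \<bullet> x + \<theta> * (m k \<bullet> v) \<le> \<beta> k"
    by (rule eventually_at_right_0_witness)
  have "x + \<theta> *\<^sub>R v = (1 - \<theta>) *\<^sub>R x + \<theta> *\<^sub>R y"
    unfolding \<open>v = y - x\<close> by (simp add: algebra_simps)
  then have "x + \<theta> *\<^sub>R v \<in> C"
    using convexD[OF C] x \<open>y \<in> C\<close> \<theta>(1,2) by simp
  moreover have "x + \<theta> *\<^sub>R v \<in> P"
    using \<theta>(3) v x by (simp add: P_def inner_add_right)
  ultimately have "z \<bullet> (\<theta> *\<^sub>R v) \<le> 0"
    using z unfolding normal_cone_def by force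
  then show "z \<bullet> v \<le> 0"
    using \<theta>(1) by (simp add: mult_le_0_iff)
qed

lemma normal_cone_Int_linear_constraints:
  fixes C :: "'a::euclidean_space set" and m :: "'k \<Rightarrow> 'a" and e :: "'j \<Rightarrow> 'a"
    and K :: "'k set" and J :: "'j set" and \<beta> :: "'k \<Rightarrow> real" and \<delta> :: "'j \<Rightarrow> real"
  defines "P \<equiv> {y. (\<forall>k\<in>K. m k \<bullet> y \<le> \<beta> k) \<and> (\<forall>j\<in>J. e j \<bullet> y = \<delta> j)}"
  assumes C: "convex C" and K: "finite K" and J: "finite J"
    and x: "x \<in> C \<inter> P" and w: "w \<in> rel_interior C \<inter> P" and z: "z \<in> normal_cone (C \<inter> P) x"
  shows "\<exists>\<eta> \<gamma>. (\<forall>k\<in>K. 0 \<le> \<eta> k \<and> (m k \<bullet> x < \<beta> k \<longrightarrow> \<eta> k = 0))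
    \<and> z - (\<Sum>k\<in>K. \<eta> k *\<^sub>R m k) - (\<Sum>j\<in>J. \<gamma> j *\<^sub>R e j) \<in> normal_cone C x"
proof -
  define A where "A = {k\<in>K. m k \<bullet> x = \<beta> k}"
  define n where "n = case_sum m e"
  let ?C = "(+) (- x) ` C"
  have "convex ?C" "0 \<in> ?C"
    using C x by auto
  moreover have "- x + w \<in> rel_interior ?C"
    unfolding rel_interior_translation using w by blast
  moreover have "finite (Inl ` A)" "finite (Inr ` J)" "Inl ` A \<inter> Inr ` J = {}"
    using K J by (auto simp: A_def)
  moreover have "\<forall>i\<in>Inl ` A. n i \<bullet> (- x + w) \<le> 0" "\<forall>j\<in>Inr ` J. n j \<bullet> (- x + w) = 0"
    using x w by (auto simp: A_def P_def n_def inner_diff_right)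
  moreover have "{y. (\<forall>i\<in>Inl ` A. n i \<bullet> y \<le> 0) \<and> (\<forall>j\<in>Inr ` J. n j \<bullet> y = 0)}
      = {y. (\<forall>k\<in>K. m k \<bullet> x = \<beta> k \<longrightarrow> m k \<bullet> y \<le> 0) \<and> (\<forall>j\<in>J. e j \<bullet> y = 0)}"
    by (auto simp: A_def n_def)
  then have "z \<in> normal_cone (?C \<inter> {y. (\<forall>i\<in>Inl ` A. n i \<bullet> y \<le> 0) \<and> (\<forall>j\<in>Inr ` J. n j \<bullet> y = 0)}) 0"
    using normal_cone_active_constraints[OF C K x[unfolded P_def] z[unfolded P_def]] by simp
  ultimately obtain \<eta> \<gamma> where \<eta>: "\<forall>i\<in>Inl ` A. 0 \<le> \<eta> i"
    "z - (\<Sum>i\<in>Inl ` A. \<eta> i *\<^sub>R n i) - (\<Sum>j\<in>Inr ` J. \<gamma> j *\<^sub>R n j) \<in> normal_cone ?C 0"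
    using multipliers_for_homogeneous_constraints[of ?C "- x + w" "Inl ` A" "Inr ` J" n z] by blast
  define \<eta>' where "\<eta>' k = (if k \<in> A then \<eta> (Inl k) else 0)" for k
  have "(\<Sum>i\<in>Inl ` A. \<eta> i *\<^sub>R n i) = (\<Sum>k\<in>A. \<eta> (Inl k) *\<^sub>R m k)"
    by (simp add: sum.reindex n_def)
  also have "\<dots> = (\<Sum>k\<in>K. \<eta>' k *\<^sub>R m k)"
    unfolding \<eta>'_def A_def sum.inter_filter[OF K] by (intro sum.cong) auto
  moreover have "(\<Sum>j\<in>Inr ` J. \<gamma> j *\<^sub>R n j) = (\<Sum>j\<in>J. \<gamma> (Inr j) *\<^sub>R e j)"
    by (simp add: sum.reindex n_def)
  moreover have "\<forall>k\<in>K. 0 \<le> \<eta>' k \<and> (m k \<bullet> x < \<beta> k \<longrightarrow> \<eta>' k = 0)"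
    using \<eta>(1) by (auto simp: \<eta>'_def A_def)
  ultimately show ?thesis
    using \<eta>(2)[unfolded normal_cone_translation] by auto
qed

section \<open>Polyhedra and extended-real convex functions\<close>

definition polyhedron_of :: "('a::real_inner \<times> real) set \<Rightarrow> 'a set" where
  "polyhedron_of Q = {x. \<forall>q\<in>Q. fst q \<bullet> x \<le> snd q}"

lemma polyhedron_eq_polyhedron_of:
  assumes "polyhedron S"
  obtains Q where "finite Q" "S = polyhedron_of Q"
proof -
  obtain F where F: "finite F" "S = \<Inter> F" "\<forall>h\<in>F. \<exists>a c. a \<noteq> 0 \<and> h = {x. a \<bullet> x \<le> c}"
    using assms unfolding polyhedron_def by blast
  have "\<forall>h\<in>F. \<exists>q. h = {x. fst q \<bullet> x \<le> snd q}"
  proof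
    fix h assume "h \<in> F"
    then obtain a c where "h = {x. a \<bullet> x \<le> c}"
      using F(3) by blast
    then show "\<exists>q. h = {x. fst q \<bullet> x \<le> snd q}"
      by (intro exI[of _ "(a, c)"]) simp
  qed
  then obtain q where "\<forall>h\<in>F. h = {x. fst (q h) \<bullet> x \<le> snd (q h)}"
    by (rule bchoice[THEN exE])
  then have "S = polyhedron_of (q ` F)"
    unfolding F(2) polyhedron_of_def by blast
  then show ?thesis
    using that F(1) by blast
qed

lemma sum_active_normals_in_normal_cone:
  assumes "finite Q" "\<forall>q\<in>Q. 0 \<le> \<eta> q \<and> (fst q \<bullet> x < snd q \<longrightarrow> \<eta> q = 0)"
  shows "(\<Sum>q\<in>Q. \<eta> q *\<^sub>R fst q) \<in> normal_cone (polyhedron_of Q) x"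
  unfolding normal_cone_def polyhedron_of_def
proof (intro CollectI ballI)
  fix p assume p: "p \<in> {p. \<forall>q\<in>Q. fst q \<bullet> p \<le> snd q}"
  have "\<eta> q * (fst q \<bullet> (p - x)) \<le> 0" if "q \<in> Q" for q
  proof (cases "\<eta> q = 0")
    case False
    then have "snd q \<le> fst q \<bullet> x"
      using assms(2) that by force
    moreover have "fst q \<bullet> p \<le> snd q"
      using p that by blast
    ultimately have "fst q \<bullet> (p - x) \<le> 0"
      by (simp add: inner_diff_right)
    moreover have "0 \<le> \<eta> q"
      using assms(2) that by blast
    ultimately show ?thesis
      by (simp add: mult_nonneg_nonpos)
  qed simp
  then show "(\<Sum>q\<in>Q. \<eta> q *\<^sub>R fst q) \<bullet> (p - x) \<le> 0"
    by (simp add: inner_sum_left sum_nonpos)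
qed

lemma mem_epigraph_e [simp]: "(x, t) \<in> epigraph_e f \<longleftrightarrow> f x \<le> ereal t"
  by (simp add: epigraph_e_def)

lemma proper_fun_finite_value:
  assumes "proper_fun f" "f x \<noteq> \<infinity>"
  obtains r where "f x = ereal r"
  using assms unfolding proper_fun_def by (cases "f x") auto

lemma convex_funD:
  assumes "convex_fun f" "f x \<le> ereal s" "f y \<le> ereal t" "0 \<le> \<theta>" "\<theta> \<le> 1"
  shows "f ((1 - \<theta>) *\<^sub>R x + \<theta> *\<^sub>R y) \<le> ereal ((1 - \<theta>) * s + \<theta> * t)"
proof -
  have "(1 - \<theta>) *\<^sub>R (x, s) + \<theta> *\<^sub>R (y, t) \<in> epigraph_e f"
    using assms by (intro convexD[OF assms(1)[unfolded convex_fun_def]]) auto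
  then show ?thesis
    by simp
qed

lemma fst_epigraph_e:
  assumes "proper_fun f"
  shows "fst ` epigraph_e f = edom f"
proof
  show "fst ` epigraph_e f \<subseteq> edom f"
    by (auto simp: edom_def epigraph_e_def)
  show "edom f \<subseteq> fst ` epigraph_e f"
  proof
    fix x assume "x \<in> edom f"
    then have "f x \<noteq> \<infinity>"
      by (simp add: edom_def)
    then obtain r where "f x = ereal r"
      by (rule proper_fun_finite_value[OF assms])
    then have "(x, r) \<in> epigraph_e f"
      by simp
    then show "x \<in> fst ` epigraph_e f"
      by (rule image_eqI[rotated]) simp
  qed
qed

lemma rel_interior_epigraph_e:
  fixes f :: "'a::euclidean_space \<Rightarrow> ereal"
  assumes "proper_fun f" "convex_fun f" "x \<in> rel_interior (edom f)"
  obtains s where "(x, s) \<in> rel_interior (epigraph_e f)"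
proof -
  have "rel_interior (edom f) = fst ` rel_interior (epigraph_e f)"
    using rel_interior_convex_linear_image[OF linear_fst, of "epigraph_e f"] assms(2)
    unfolding fst_epigraph_e[OF assms(1)] convex_fun_def by simp
  then show ?thesis
    using assms(3) that by force
qed

lemma epigraph_e_Int_polyhedron:
  fixes f :: "'a::euclidean_space \<Rightarrow> ereal"
  assumes "proper_fun f" "convex_fun f" "x \<in> rel_interior (edom f) \<or> (polyhedral_fun f \<and> x \<in> edom f)"
  obtains C Q s where "convex C" "finite Q" "epigraph_e f = C \<inter> polyhedron_of Q"
    "(x, s) \<in> rel_interior C" "(x, s) \<in> epigraph_e f"
proof (cases "polyhedral_fun f \<and> x \<in> edom f")
  case True
  \<comment> \<open>A polyhedral epigraph becomes pure constraints, so \<open>x\<close> only has to lie in the domain.\<close>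
  then obtain Q where "finite Q" "epigraph_e f = UNIV \<inter> polyhedron_of Q"
    using polyhedron_eq_polyhedron_of unfolding polyhedral_fun_def by auto
  moreover have "f x \<noteq> \<infinity>"
    using True by (simp add: edom_def)
  then obtain s where "f x = ereal s"
    by (rule proper_fun_finite_value[OF assms(1)])
  moreover have "(x, s) \<in> epigraph_e f"
    using calculation(3) by simp
  ultimately show ?thesis
    using that[of UNIV Q s] by simp
next
  case False
  then obtain s where "(x, s) \<in> rel_interior (epigraph_e f)"
    using assms rel_interior_epigraph_e by blast
  show ?thesis
  proof (rule that)
    show "convex (epigraph_e f)"
      using assms(2) by (simp add: convex_fun_def)
    show "epigraph_e f = epigraph_e f \<inter> polyhedron_of {}"
      by (simp add: polyhedron_of_def)
    show "(x, s) \<in> epigraph_e f"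
      using \<open>(x, s) \<in> rel_interior (epigraph_e f)\<close> rel_interior_subset by blast
  qed (use \<open>(x, s) \<in> rel_interior (epigraph_e f)\<close> in auto)
qed

lemma csubdiff_if_normal_cone_epigraph_e:
  assumes "proper_fun f" "f x = ereal r" "(u, -1) \<in> normal_cone (epigraph_e f) (x, r)"
  shows "u \<in> csubdiff f x"
  unfolding csubdiff_def
proof (intro CollectI conjI allI)
  show "f x < \<infinity>"
    using assms(2) by simp
  fix y
  show "f x + ereal (u \<bullet> (y - x)) \<le> f y"
  proof (cases "f y = \<infinity>")
    case False
    then obtain t where "f y = ereal t"
      by (rule proper_fun_finite_value[OF assms(1)])
    then have "(y, t) \<in> epigraph_e f"
      by simp
    then have "(u, -1) \<bullet> ((y, t) - (x, r)) \<le> 0"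
      using assms(3) unfolding normal_cone_def by blast
    then have "u \<bullet> (y - x) - (t - r) \<le> 0"
      by (simp add: inner_prod_def)
    then show ?thesis
      using assms(2) \<open>f y = ereal t\<close> by simp
  qed simp
qed

section \<open>Local behaviour of the penalty\<close>

lemma eventually_sign_stable:
  fixes u :: "real^'r"
  shows "\<forall>\<^sub>F v in nhds u. \<forall>i. u $ i \<noteq> 0 \<longrightarrow> (0 < v $ i \<longleftrightarrow> 0 < u $ i)"
proof (rule eventually_all_finite)
  fix i
  have lim: "((\<lambda>v. v $ i) \<longlongrightarrow> u $ i) (nhds u)"
    by (rule tendsto_vec_nth[OF filterlim_ident])
  consider "0 < u $ i" | "u $ i < 0" | "u $ i = 0"
    by linarith
  then show "\<forall>\<^sub>F v in nhds u. u $ i \<noteq> 0 \<longrightarrow> (0 < v $ i \<longleftrightarrow> 0 < u $ i)"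
  proof cases
    case 1
    then show ?thesis
      using order_tendstoD(1)[OF lim 1] by eventually_elim (use 1 in auto)
  next
    case 2
    then show ?thesis
      using order_tendstoD(2)[OF lim 2] by eventually_elim (use 2 in auto)
  qed simp
qed

lemma Phi_plus_eventually_const:
  fixes u :: "real^'r"
  shows "\<forall>\<^sub>F v in nhds u. (\<forall>i. u $ i = 0 \<longrightarrow> v $ i \<le> 0) \<longrightarrow> Phi_plus lam v = Phi_plus lam u"
  using eventually_sign_stable[of u]
proof eventually_elim
  case (elim v)
  show ?case
  proof
    assume "\<forall>i. u $ i = 0 \<longrightarrow> v $ i \<le> 0"
    then have "(0 < v $ i) \<longleftrightarrow> (0 < u $ i)" for i
      using elim by (cases "u $ i = 0") auto
    then show "Phi_plus lam v = Phi_plus lam u"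
      by (simp add: Phi_plus_def)
  qed
qed

lemma Phi_plus_local_subgradient:
  fixes u z :: "real^'r"
  assumes "\<forall>i. 0 < lam $ i" "z \<in> subdiff_Phi_plus u"
  shows "\<forall>\<^sub>F v in nhds u. Phi_plus lam u + z \<bullet> (v - u) \<le> Phi_plus lam v"
proof -
  have "\<forall>\<^sub>F v in nhds u. \<forall>i. u $ i = 0 \<longrightarrow> z $ i * v $ i < lam $ i"
  proof (rule eventually_all_finite)
    fix i
    have "((\<lambda>v. z $ i * v $ i) \<longlongrightarrow> z $ i * u $ i) (nhds u)"
      by (intro tendsto_intros tendsto_vec_nth[OF filterlim_ident])
    then show "\<forall>\<^sub>F v in nhds u. u $ i = 0 \<longrightarrow> z $ i * v $ i < lam $ i"
      using assms(1) by (cases "u $ i = 0") (auto dest: order_tendstoD(2)[of _ _ _ "lam $ i"])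
  qed
  with eventually_sign_stable[of u]
  show ?thesis
  proof eventually_elim
    case (elim v)
    have "z $ i * (v $ i - u $ i) \<le> lam $ i * (if 0 < v $ i then 1 else 0) - lam $ i * (if 0 < u $ i then 1 else 0)"
      for i
      using elim assms by (cases "u $ i = 0") (auto simp: subdiff_Phi_plus_def mult_nonneg_nonpos less_imp_le)
    then have "z \<bullet> (v - u) \<le> Phi_plus lam v - Phi_plus lam u"
      unfolding Phi_plus_def inner_vec_def sum_subtractf[symmetric] by (intro sum_mono) simp
    then show ?case
      by simp
  qed
qed

lemma local_minimizer_iff_eventually: "local_minimizer F x \<longleftrightarrow> (\<forall>\<^sub>F y in nhds x. F x \<le> F y)"
  unfolding local_minimizer_def eventually_nhds_metric by (simp add: Ball_def dist_commute)

lemma eventually_nhds_affine_compose: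
  fixes B :: "real^'n^'r"
  assumes "\<forall>\<^sub>F v in nhds (B *v x - b). P v"
  shows "\<forall>\<^sub>F y in nhds x. P (B *v y - b)"
proof -
  have "((*v) B \<longlongrightarrow> B *v x) (nhds x)"
    using matrix_vector_mult_linear_continuous_at[where A = B and z = x]
    by (simp add: isCont_def tendsto_at_iff_tendsto_nhds)
  then have "((\<lambda>y. B *v y - b) \<longlongrightarrow> B *v x - b) (nhds x)"
    by (intro tendsto_diff tendsto_const)
  then show ?thesis
    by (rule eventually_compose_filterlim[OF assms])
qed

lemma csubdiffD:
  assumes "u \<in> csubdiff f x" "f x = ereal r" "f y = ereal t"
  shows "r + u \<bullet> (y - x) \<le> t"
  using assms unfolding csubdiff_def by (force elim: allE[of _ y])

lemma stationary_imp_local_minimizer: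
  fixes f :: "real^'n \<Rightarrow> ereal" and g :: "real^'m \<Rightarrow> ereal"
    and A :: "real^'n^'m" and B :: "real^'n^'r" and b lam :: "real^'r"
  assumes f: "proper_fun f" and g: "proper_fun g" and lam: "\<forall>i. 0 < lam $ i"
    and stat: "stationary f g A B b xs"
  shows "local_minimizer (Fobj f g A B b lam) xs"
proof -
  obtain u v z where u: "u \<in> csubdiff f xs" and v: "v \<in> csubdiff g (A *v xs)"
    and z: "z \<in> subdiff_Phi_plus (B *v xs - b)" and uvz: "u + transpose A *v v + transpose B *v z = 0"
    using stat unfolding stationary_def by blast
  have "f xs \<noteq> \<infinity>" "g (A *v xs) \<noteq> \<infinity>"
    using u v by (auto simp: csubdiff_def)
  then obtain fx gx where fx: "f xs = ereal fx" and gx: "g (A *v xs) = ereal gx"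
    using proper_fun_finite_value[OF f] proper_fun_finite_value[OF g] by metis
  have "\<forall>\<^sub>F y in nhds xs. Phi_plus lam (B *v xs - b) + z \<bullet> (B *v y - B *v xs) \<le> Phi_plus lam (B *v y - b)"
    using eventually_nhds_affine_compose[OF Phi_plus_local_subgradient[OF lam z]] by simp
  then show ?thesis
    unfolding local_minimizer_iff_eventually
  proof (rule eventually_mono)
    fix y
    assume Phi: "Phi_plus lam (B *v xs - b) + z \<bullet> (B *v y - B *v xs) \<le> Phi_plus lam (B *v y - b)"
    show "Fobj f g A B b lam xs \<le> Fobj f g A B b lam y"
    proof (cases "f y = \<infinity> \<or> g (A *v y) = \<infinity>")
      case True
      then have "Fobj f g A B b lam y = \<infinity>"
        using f g by (auto simp: Fobj_def proper_fun_def)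
      then show ?thesis
        by simp
    next
      case False
      then obtain fy gy where fy: "f y = ereal fy" and gy: "g (A *v y) = ereal gy"
        using proper_fun_finite_value[OF f] proper_fun_finite_value[OF g] by metis
      have "(u + transpose A *v v + transpose B *v z) \<bullet> (y - xs) = 0"
        using uvz by simp
      then have "u \<bullet> (y - xs) + v \<bullet> (A *v y - A *v xs) + z \<bullet> (B *v y - B *v xs) = 0"
        by (simp add: inner_add_left dot_lmul_matrix matrix_vector_mult_diff_distrib)
      then show ?thesis
        using csubdiffD[OF u fx fy] csubdiffD[OF v gx gy] Phi unfolding Fobj_def fx gx fy gy
        by simp
    qed
  qed
qed

definition active_polyhedron :: "real^'n^'r \<Rightarrow> real^'r \<Rightarrow> real^'n \<Rightarrow> (real^'n) set" where
  "active_polyhedron B b xs = {x. \<forall>i. (B *v xs - b) $ i = 0 \<longrightarrow> (B *v x - b) $ i \<le> 0}"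

lemma local_minimizer_imp_eventually_min_on_active_polyhedron:
  fixes f :: "real^'n \<Rightarrow> ereal" and g :: "real^'m \<Rightarrow> ereal"
    and A :: "real^'n^'m" and B :: "real^'n^'r" and b lam :: "real^'r"
  assumes "local_minimizer (Fobj f g A B b lam) xs" "f xs = ereal fx" "g (A *v xs) = ereal gx"
  shows "\<forall>\<^sub>F y in nhds xs. y \<in> active_polyhedron B b xs \<longrightarrow> ereal (fx + gx) \<le> f y + g (A *v y)"
proof -
  have "\<forall>\<^sub>F y in nhds xs.
      y \<in> active_polyhedron B b xs \<longrightarrow> Phi_plus lam (B *v y - b) = Phi_plus lam (B *v xs - b)"
    using eventually_nhds_affine_compose[OF Phi_plus_eventually_const] by (simp add: active_polyhedron_def)
  moreover have "\<forall>\<^sub>F y in nhds xs. Fobj f g A B b lam xs \<le> Fobj f g A B b lam y"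
    using assms(1) by (simp add: local_minimizer_iff_eventually)
  ultimately show ?thesis
  proof eventually_elim
    case (elim y)
    let ?\<Phi> = "ereal (Phi_plus lam (B *v xs - b))"
    show ?case
    proof
      assume "y \<in> active_polyhedron B b xs"
      then have "ereal fx + ereal gx + ?\<Phi> \<le> f y + g (A *v y) + ?\<Phi>"
        using elim by (simp add: Fobj_def assms(2,3))
      then show "ereal (fx + gx) \<le> f y + g (A *v y)"
        using ereal_add_le_add_iff2[of "ereal fx + ereal gx" ?\<Phi> "f y + g (A *v y)"]
        by (simp del: plus_ereal.simps) simp
    qed
  qed
qed

lemma convex_active_polyhedron: "convex (active_polyhedron B b xs)"
proof -
  have "active_polyhedron B b xs = (\<Inter>i\<in>{i. (B *v xs - b) $ i = 0}. {x. B $ i \<bullet> x \<le> b $ i})"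
    by (auto simp: active_polyhedron_def matrix_vector_mul_component)
  then show ?thesis
    by (simp add: convex_INT convex_halfspace_le)
qed

lemma min_on_active_polyhedron_if_local_minimizer:
  fixes f :: "real^'n \<Rightarrow> ereal" and g :: "real^'m \<Rightarrow> ereal"
    and A :: "real^'n^'m" and B :: "real^'n^'r" and b lam :: "real^'r"
  assumes f: "convex_fun f" and g: "convex_fun g" and lm: "local_minimizer (Fobj f g A B b lam) xs"
    and fx: "f xs = ereal fx" and gx: "g (A *v xs) = ereal gx"
    and x: "x \<in> active_polyhedron B b xs" "f x \<le> ereal s" "g (A *v x) \<le> ereal t"
  shows "fx + gx \<le> s + t"
proof -
  define y where "y \<theta> = (1 - \<theta>) *\<^sub>R xs + \<theta> *\<^sub>R x" for \<theta> :: real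
  have "(y \<longlongrightarrow> (1 - 0) *\<^sub>R xs + 0 *\<^sub>R x) (at_right 0)"
    unfolding y_def by (intro tendsto_intros)
  then have "\<forall>\<^sub>F \<theta> in at_right 0. y \<theta> \<in> active_polyhedron B b xs \<longrightarrow> ereal (fx + gx) \<le> f (y \<theta>) + g (A *v y \<theta>)"
    using eventually_compose_filterlim[OF local_minimizer_imp_eventually_min_on_active_polyhedron[OF lm fx gx]]
    by simp
  then obtain \<theta> where \<theta>: "0 < \<theta>" "\<theta> < 1"
    "y \<theta> \<in> active_polyhedron B b xs \<longrightarrow> ereal (fx + gx) \<le> f (y \<theta>) + g (A *v y \<theta>)"
    by (rule eventually_at_right_0_witness)
  have "xs \<in> active_polyhedron B b xs"
    by (simp add: active_polyhedron_def)
  then have "y \<theta> \<in> active_polyhedron B b xs"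
    unfolding y_def using convexD[OF convex_active_polyhedron _ x(1)] \<theta>(1,2) by simp
  then have "ereal (fx + gx) \<le> f (y \<theta>) + g (A *v y \<theta>)"
    using \<theta>(3) by blast
  also have "\<dots> \<le> ereal ((1 - \<theta>) * fx + \<theta> * s) + ereal ((1 - \<theta>) * gx + \<theta> * t)"
  proof (rule add_mono)
    show "f (y \<theta>) \<le> ereal ((1 - \<theta>) * fx + \<theta> * s)"
      unfolding y_def using convex_funD[OF f _ x(2), of xs fx \<theta>] fx \<theta>(1,2) by simp
    have "A *v y \<theta> = (1 - \<theta>) *\<^sub>R (A *v xs) + \<theta> *\<^sub>R (A *v x)"
      by (simp add: y_def algebra_simps)
    then show "g (A *v y \<theta>) \<le> ereal ((1 - \<theta>) * gx + \<theta> * t)"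
      using convex_funD[OF g _ x(3), of "A *v xs" gx \<theta>] gx \<theta>(1,2) by simp
  qed
  finally have "\<theta> * (fx + gx) \<le> \<theta> * (s + t)"
    by (simp add: algebra_simps)
  then show ?thesis
    using \<theta>(1) by simp
qed

text \<open>
  The lifted problem lives on pairs \<open>((x, s), (y, t))\<close> of candidate epigraph points of \<open>f\<close> and \<open>g\<close>.
  Its inequality constraints are indexed by \<open>Qf <+> Qg <+> I\<close>: facets of a polyhedral description
  of \<open>epi f\<close>, of \<open>epi g\<close>, and active rows of \<open>B x \<le> b\<close>; its equality constraints, indexed by the
  rows of \<open>A\<close>, say \<open>y = A x\<close>.
\<close>

definition lifted_constraint :: "real^'n^'r
    \<Rightarrow> (((real^'n) \<times> real) \<times> real) + (((real^'m) \<times> real) \<times> real) + 'r \<Rightarrow> ((real^'n) \<times> real) \<times> ((real^'m) \<times> real)"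
  where "lifted_constraint B = case_sum (\<lambda>q. (fst q, 0)) (case_sum (\<lambda>q. (0, fst q)) (\<lambda>i. ((B $ i, 0), 0)))"

definition lifted_bound :: "real^'r \<Rightarrow> (((real^'n) \<times> real) \<times> real) + (((real^'m) \<times> real) \<times> real) + 'r \<Rightarrow> real"
  where "lifted_bound b = case_sum snd (case_sum snd (\<lambda>i. b $ i))"

definition lifted_equality :: "real^'n^'m \<Rightarrow> 'm \<Rightarrow> ((real^'n) \<times> real) \<times> ((real^'m) \<times> real)"
  where "lifted_equality A j = ((- A $ j, 0), (axis j 1, 0))"

lemma ball_Plus_iff: "(\<forall>k\<in>A <+> B. P k) \<longleftrightarrow> (\<forall>a\<in>A. P (Inl a)) \<and> (\<forall>b\<in>B. P (Inr b))"
  by (auto simp: Plus_def)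

lemma lifted_constraints_iff:
  fixes A :: "real^'n^'m" and B :: "real^'n^'r"
  shows "(\<forall>k\<in>Qf <+> Qg <+> I. lifted_constraint B k \<bullet> ((x, s), (y, t)) \<le> lifted_bound b k)
      \<and> (\<forall>j\<in>UNIV. lifted_equality A j \<bullet> ((x, s), (y, t)) = 0)
    \<longleftrightarrow> (x, s) \<in> polyhedron_of Qf \<and> (y, t) \<in> polyhedron_of Qg \<and> (\<forall>i\<in>I. (B *v x - b) $ i \<le> 0)
      \<and> y = A *v x"
  by (auto simp: ball_Plus_iff lifted_constraint_def lifted_bound_def lifted_equality_def polyhedron_of_def
      inner_prod_def inner_axis' matrix_vector_mul_component vec_eq_iff)

lemma transpose_mult_vector_eq_sum:
  fixes M :: "real^'n^'m"
  shows "transpose M *v v = (\<Sum>i\<in>UNIV. v $ i *\<^sub>R M $ i)"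
  by (simp add: vec_eq_iff matrix_vector_mult_def transpose_def mult.commute)

lemma sum_lifted_constraint:
  fixes B :: "real^'n^'r" and \<eta> :: "(((real^'n) \<times> real) \<times> real) + (((real^'m) \<times> real) \<times> real) + 'r \<Rightarrow> real"
  assumes "finite Qf" "finite Qg"
  shows "(\<Sum>k\<in>Qf <+> Qg <+> I. \<eta> k *\<^sub>R lifted_constraint B k)
    = ((\<Sum>q\<in>Qf. \<eta> (Inl q) *\<^sub>R fst q) + (transpose B *v (\<chi> i. if i \<in> I then \<eta> (Inr (Inr i)) else 0), 0),
       \<Sum>q\<in>Qg. \<eta> (Inr (Inl q)) *\<^sub>R fst q)"
proof -
  have "(\<Sum>i\<in>I. \<eta> (Inr (Inr i)) *\<^sub>R B $ i) = transpose B *v (\<chi> i. if i \<in> I then \<eta> (Inr (Inr i)) else 0)"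
    unfolding transpose_mult_vector_eq_sum by (simp add: if_distrib[of "\<lambda>c. c *\<^sub>R _"] sum.If_cases)
  then show ?thesis
    using assms
    by (simp add: sum.Plus lifted_constraint_def prod_eq_iff fst_sum snd_sum)
qed

lemma sum_lifted_equality:
  fixes A :: "real^'n^'m"
  shows "(\<Sum>j\<in>UNIV. v $ j *\<^sub>R lifted_equality A j) = ((- (transpose A *v v), 0), (v, 0))"
proof -
  have "(\<Sum>j\<in>UNIV. v $ j *\<^sub>R axis j 1) = v"
    by (simp add: vec_eq_iff axis_def if_distrib[of "\<lambda>c. _ * c"] sum.If_cases)
  then show ?thesis
    unfolding transpose_mult_vector_eq_sum by (simp add: lifted_equality_def prod_eq_iff fst_sum snd_sum sum_negf)
qed

lemma lifted_multipliers:
  fixes f :: "real^'n \<Rightarrow> ereal" and g :: "real^'m \<Rightarrow> ereal"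
    and A :: "real^'n^'m" and B :: "real^'n^'r" and b :: "real^'r" and xs :: "real^'n"
    and Qf :: "(((real^'n) \<times> real) \<times> real) set" and Qg :: "(((real^'m) \<times> real) \<times> real) set"
    and fx gx :: real
  defines "K \<equiv> Qf <+> Qg <+> {i. (B *v xs - b) $ i = 0}"
    and "w0 \<equiv> ((xs, fx), (A *v xs, gx))"
  assumes Cf: "convex Cf" "finite Qf" "epigraph_e f = Cf \<inter> polyhedron_of Qf"
      "(x1, s1) \<in> rel_interior Cf" "(x1, s1) \<in> epigraph_e f"
    and Cg: "convex Cg" "finite Qg" "epigraph_e g = Cg \<inter> polyhedron_of Qg"
      "(A *v x1, t1) \<in> rel_interior Cg" "(A *v x1, t1) \<in> epigraph_e g"
    and x1: "x1 \<in> active_polyhedron B b xs"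
    and fx: "f xs = ereal fx" and gx: "g (A *v xs) = ereal gx"
    and min: "\<And>x s t. x \<in> active_polyhedron B b xs \<Longrightarrow> f x \<le> ereal s \<Longrightarrow> g (A *v x) \<le> ereal t
      \<Longrightarrow> fx + gx \<le> s + t"
  obtains \<eta> \<gamma> where "\<forall>k\<in>K. 0 \<le> \<eta> k \<and> (lifted_constraint B k \<bullet> w0 < lifted_bound b k \<longrightarrow> \<eta> k = 0)"
    "((0, -1), (0, -1)) - (\<Sum>k\<in>K. \<eta> k *\<^sub>R lifted_constraint B k) - (\<Sum>j\<in>UNIV. \<gamma> j *\<^sub>R lifted_equality A j)
      \<in> normal_cone (Cf \<times> Cg) w0"
proof -
  define P where "P = {w. (\<forall>k\<in>K. lifted_constraint B k \<bullet> w \<le> lifted_bound b k)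
    \<and> (\<forall>j\<in>UNIV. lifted_equality A j \<bullet> w = (0::real))}"
  have "((x, s), (y, t)) \<in> P \<longleftrightarrow> (x, s) \<in> polyhedron_of Qf \<and> (y, t) \<in> polyhedron_of Qg
      \<and> (\<forall>i\<in>{i. (B *v xs - b) $ i = 0}. (B *v x - b) $ i \<le> 0) \<and> y = A *v x" for x s y t
    unfolding P_def K_def mem_Collect_eq by (rule lifted_constraints_iff)
  then have feasible: "((x, s), (y, t)) \<in> (Cf \<times> Cg) \<inter> P \<longleftrightarrow> (x, s) \<in> epigraph_e f
      \<and> (y, t) \<in> epigraph_e g \<and> y = A *v x \<and> x \<in> active_polyhedron B b xs" for x s y t
    unfolding Cf(3) Cg(3) by (auto simp: active_polyhedron_def)
  have "w0 \<in> (Cf \<times> Cg) \<inter> P"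
    unfolding w0_def feasible using fx gx by (simp add: active_polyhedron_def)
  moreover have "((x1, s1), (A *v x1, t1)) \<in> rel_interior (Cf \<times> Cg) \<inter> P"
    using Cf(4,5) Cg(4,5) x1 feasible[of x1 s1 "A *v x1" t1] by (simp add: rel_interior_Times Cf(1) Cg(1))
  moreover have "((0, -1), (0, -1)) \<in> normal_cone ((Cf \<times> Cg) \<inter> P) w0"
    unfolding normal_cone_def
  proof (intro CollectI ballI)
    fix w assume "w \<in> (Cf \<times> Cg) \<inter> P"
    moreover obtain x s y t where w: "w = ((x, s), (y, t))"
      by (metis prod.collapse)
    ultimately have "(x, s) \<in> epigraph_e f \<and> (y, t) \<in> epigraph_e g \<and> y = A *v x
        \<and> x \<in> active_polyhedron B b xs"
      using feasible[of x s y t] by blast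
    then have "fx + gx \<le> s + t"
      using min by auto
    then show "((0, -1), (0, -1)) \<bullet> (w - w0) \<le> 0"
      by (simp add: w w0_def inner_prod_def)
  qed
  moreover have "finite K"
    using Cf(2) Cg(2) by (simp add: K_def)
  ultimately show ?thesis
    using normal_cone_Int_linear_constraints[OF convex_Times[OF Cf(1) Cg(1)] \<open>finite K\<close> finite_class.finite_UNIV,
        where m = "lifted_constraint B" and \<beta> = "lifted_bound b" and e = "lifted_equality A" and \<delta> = "\<lambda>_. 0"]
      that unfolding P_def by blast
qed

lemma epigraph_normals_from_lifted_multipliers:
  fixes f :: "real^'n \<Rightarrow> ereal" and g :: "real^'m \<Rightarrow> ereal"
    and A :: "real^'n^'m" and B :: "real^'n^'r" and b :: "real^'r" and xs :: "real^'n" and fx gx :: real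
    and Qf :: "(((real^'n) \<times> real) \<times> real) set" and Qg :: "(((real^'m) \<times> real) \<times> real) set"
    and I :: "'r set" and \<eta> :: "(((real^'n) \<times> real) \<times> real) + (((real^'m) \<times> real) \<times> real) + 'r \<Rightarrow> real"
  defines "w0 \<equiv> ((xs, fx), (A *v xs, gx))"
    and "\<zeta> \<equiv> \<chi> i. if i \<in> I then \<eta> (Inr (Inr i)) else 0"
  assumes Cf: "finite Qf" "epigraph_e f = Cf \<inter> polyhedron_of Qf"
    and Cg: "finite Qg" "epigraph_e g = Cg \<inter> polyhedron_of Qg"
    and fx: "f xs = ereal fx" and gx: "g (A *v xs) = ereal gx"
    and \<eta>: "\<forall>k\<in>Qf <+> Qg <+> I. 0 \<le> \<eta> k \<and> (lifted_constraint B k \<bullet> w0 < lifted_bound b k \<longrightarrow> \<eta> k = 0)"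
    and a: "((0, -1), (0, -1)) - (\<Sum>k\<in>Qf <+> Qg <+> I. \<eta> k *\<^sub>R lifted_constraint B k)
      - (\<Sum>j\<in>UNIV. v $ j *\<^sub>R lifted_equality A j) \<in> normal_cone (Cf \<times> Cg) w0"
  shows "(transpose A *v v - transpose B *v \<zeta>, -1) \<in> normal_cone (epigraph_e f) (xs, fx)"
    and "(- v, -1) \<in> normal_cone (epigraph_e g) (A *v xs, gx)"
proof -
  let ?a = "((0, -1), (0, -1)) - (\<Sum>k\<in>Qf <+> Qg <+> I. \<eta> k *\<^sub>R lifted_constraint B k)
    - (\<Sum>j\<in>UNIV. v $ j *\<^sub>R lifted_equality A j)"
  have "(xs, fx) \<in> epigraph_e f" "(A *v xs, gx) \<in> epigraph_e g"
    using fx gx by simp_all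
  then have "(xs, fx) \<in> Cf" "(A *v xs, gx) \<in> Cg"
    unfolding Cf(2) Cg(2) by simp_all
  then have af: "fst ?a \<in> normal_cone Cf (xs, fx)" and ag: "snd ?a \<in> normal_cone Cg (A *v xs, gx)"
    using normal_cone_Times_fst[OF a[unfolded w0_def]] normal_cone_Times_snd[OF a[unfolded w0_def]]
    by simp_all
  have pf: "(\<Sum>q\<in>Qf. \<eta> (Inl q) *\<^sub>R fst q) \<in> normal_cone (polyhedron_of Qf) (xs, fx)"
    and pg: "(\<Sum>q\<in>Qg. \<eta> (Inr (Inl q)) *\<^sub>R fst q) \<in> normal_cone (polyhedron_of Qg) (A *v xs, gx)"
    using \<eta> by (auto intro!: sum_active_normals_in_normal_cone Cf(1) Cg(1)
        simp: ball_Plus_iff lifted_constraint_def lifted_bound_def w0_def)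
  have "fst ?a + (\<Sum>q\<in>Qf. \<eta> (Inl q) *\<^sub>R fst q) = (transpose A *v v - transpose B *v \<zeta>, -1)"
    and "snd ?a + (\<Sum>q\<in>Qg. \<eta> (Inr (Inl q)) *\<^sub>R fst q) = (- v, -1)"
    unfolding sum_lifted_constraint[OF Cf(1) Cg(1)] sum_lifted_equality \<zeta>_def by simp_all
  then show "(transpose A *v v - transpose B *v \<zeta>, -1) \<in> normal_cone (epigraph_e f) (xs, fx)"
    and "(- v, -1) \<in> normal_cone (epigraph_e g) (A *v xs, gx)"
    using normal_cone_add_Int[OF af pf] normal_cone_add_Int[OF ag pg] unfolding Cf(2) Cg(2) by simp_all
qed

lemma stationary_if_min_on_active_polyhedron:
  fixes f :: "real^'n \<Rightarrow> ereal" and g :: "real^'m \<Rightarrow> ereal"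
    and A :: "real^'n^'m" and B :: "real^'n^'r" and b :: "real^'r"
  assumes f: "proper_fun f" "convex_fun f" and g: "proper_fun g" "convex_fun g"
    and slater_f: "x1 \<in> rel_interior (edom f) \<or> (polyhedral_fun f \<and> x1 \<in> edom f)"
    and slater_g: "A *v x1 \<in> rel_interior (edom g) \<or> (polyhedral_fun g \<and> A *v x1 \<in> edom g)"
    and x1: "x1 \<in> active_polyhedron B b xs"
    and fx: "f xs = ereal fx" and gx: "g (A *v xs) = ereal gx"
    and min: "\<And>x s t. x \<in> active_polyhedron B b xs \<Longrightarrow> f x \<le> ereal s \<Longrightarrow> g (A *v x) \<le> ereal t
      \<Longrightarrow> fx + gx \<le> s + t"
  shows "stationary f g A B b xs"
proof -
  obtain Cf Qf s1 where Cf: "convex Cf" "finite Qf" "epigraph_e f = Cf \<inter> polyhedron_of Qf"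
      "(x1, s1) \<in> rel_interior Cf" "(x1, s1) \<in> epigraph_e f"
    by (rule epigraph_e_Int_polyhedron[OF f slater_f])
  obtain Cg Qg t1 where Cg: "convex Cg" "finite Qg" "epigraph_e g = Cg \<inter> polyhedron_of Qg"
      "(A *v x1, t1) \<in> rel_interior Cg" "(A *v x1, t1) \<in> epigraph_e g"
    by (rule epigraph_e_Int_polyhedron[OF g slater_g])
  define I where "I = {i. (B *v xs - b) $ i = 0}"
  obtain \<eta> \<gamma> where \<eta>: "\<forall>k\<in>Qf <+> Qg <+> I. 0 \<le> \<eta> k
      \<and> (lifted_constraint B k \<bullet> ((xs, fx), (A *v xs, gx)) < lifted_bound b k \<longrightarrow> \<eta> k = 0)"
    and a: "((0, -1), (0, -1)) - (\<Sum>k\<in>Qf <+> Qg <+> I. \<eta> k *\<^sub>R lifted_constraint B k)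
      - (\<Sum>j\<in>UNIV. \<gamma> j *\<^sub>R lifted_equality A j) \<in> normal_cone (Cf \<times> Cg) ((xs, fx), (A *v xs, gx))"
    unfolding I_def by (rule lifted_multipliers[OF Cf Cg x1 fx gx min])
  define v where "v = (\<chi> j. \<gamma> j)"
  define \<zeta> where "\<zeta> = (\<chi> i. if i \<in> I then \<eta> (Inr (Inr i)) else 0)"
  have "(transpose A *v v - transpose B *v \<zeta>, -1) \<in> normal_cone (epigraph_e f) (xs, fx)"
    and "(- v, -1) \<in> normal_cone (epigraph_e g) (A *v xs, gx)"
    using epigraph_normals_from_lifted_multipliers[OF Cf(2,3) Cg(2,3) fx gx \<eta>, of v] a
    by (simp_all add: v_def \<zeta>_def)
  then have "transpose A *v v - transpose B *v \<zeta> \<in> csubdiff f xs" "- v \<in> csubdiff g (A *v xs)"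
    using csubdiff_if_normal_cone_epigraph_e f(1) g(1) fx gx by blast+
  moreover have "\<zeta> \<in> subdiff_Phi_plus (B *v xs - b)"
    using \<eta> by (auto simp: subdiff_Phi_plus_def \<zeta>_def I_def ball_Plus_iff)
  moreover have "transpose A *v (- v) = - (transpose A *v v)"
    by (simp add: vec_eq_iff vector_matrix_mult_def sum_negf)
  ultimately show ?thesis
    unfolding stationary_def by (intro exI conjI) (auto simp: algebra_simps)
qed

lemma local_minimizer_imp_stationary:
  fixes f :: "real^'n \<Rightarrow> ereal" and g :: "real^'m \<Rightarrow> ereal"
    and A :: "real^'n^'m" and B :: "real^'n^'r" and b lam :: "real^'r"
  assumes f: "proper_fun f" "convex_fun f" and g: "proper_fun g" "convex_fun g"
    and lm: "local_minimizer (Fobj f g A B b lam) xs" and fin: "Fobj f g A B b lam xs < \<infinity>"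
    and slater_f: "x1 \<in> rel_interior (edom f) \<or> (polyhedral_fun f \<and> x1 \<in> edom f)"
    and slater_g: "A *v x1 \<in> rel_interior (edom g) \<or> (polyhedral_fun g \<and> A *v x1 \<in> edom g)"
    and x1: "x1 \<in> active_polyhedron B b xs"
  shows "stationary f g A B b xs"
proof -
  have "f xs \<noteq> \<infinity>" "g (A *v xs) \<noteq> \<infinity>"
    using fin f(1) g(1) by (auto simp: Fobj_def proper_fun_def)
  then obtain fx gx where fx: "f xs = ereal fx" and gx: "g (A *v xs) = ereal gx"
    using proper_fun_finite_value[OF f(1)] proper_fun_finite_value[OF g(1)] by metis
  show ?thesis
    by (rule stationary_if_min_on_active_polyhedron[OF f g slater_f slater_g x1 fx gx])
      (rule min_on_active_polyhedron_if_local_minimizer[OF f(2) g(2) lm fx gx])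
qed

theorem mainTheorem11:
  fixes f :: "real^'n \<Rightarrow> ereal" and g :: "real^'m \<Rightarrow> ereal"
    and A :: "real^'n^'m" and B :: "real^'n^'r" and b lam :: "real^'r"
  assumes f: "proper_fun f" "lsc_fun f" "convex_fun f"
    and g: "proper_fun g" "lsc_fun g" "convex_fun g"
    and lam: "\<forall>i. lam $ i > 0"
  shows "(\<forall>xs. stationary f g A B b xs \<longrightarrow> local_minimizer (Fobj f g A B b lam) xs)
    \<and> (\<forall>xs. local_minimizer (Fobj f g A B b lam) xs \<and> Fobj f g A B b lam xs < \<infinity>
         \<and> (\<exists>x. (x \<in> rel_interior (edom f) \<or> (polyhedral_fun f \<and> x \<in> edom f))
               \<and> (A *v x \<in> rel_interior (edom g) \<or> (polyhedral_fun g \<and> A *v x \<in> edom g))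
               \<and> (\<forall>i. (B *v xs - b) $ i = 0 \<longrightarrow> (B *v x - b) $ i \<le> 0))
         \<longrightarrow> stationary f g A B b xs)"
proof (intro conjI allI impI)
  fix xs
  assume "stationary f g A B b xs"
  then show "local_minimizer (Fobj f g A B b lam) xs"
    using stationary_imp_local_minimizer[OF f(1) g(1) lam] by blast
next
  fix xs
  assume "local_minimizer (Fobj f g A B b lam) xs \<and> Fobj f g A B b lam xs < \<infinity>
    \<and> (\<exists>x. (x \<in> rel_interior (edom f) \<or> (polyhedral_fun f \<and> x \<in> edom f))
          \<and> (A *v x \<in> rel_interior (edom g) \<or> (polyhedral_fun g \<and> A *v x \<in> edom g))
          \<and> (\<forall>i. (B *v xs - b) $ i = 0 \<longrightarrow> (B *v x - b) $ i \<le> 0))"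
  then show "stationary f g A B b xs"
    using local_minimizer_imp_stationary[OF f(1,3) g(1,3)] unfolding active_polyhedron_def by blast
qed

end
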